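(* Let ${\cal O}$ be the union of some of the sets $A^mB^n$, including $A$ and $B$. Then, the set $Q^{\cal O}$ of ${\cal O}$-positive distributions is closed under wirings.
   Context: Bipartite Bell scenario: Alice (Bob) feeds an input $x$ ($y$) from a finite alphabet and receives an output $a$ ($b$) from a finite alphabet; a box is a no-signalling distribution $P(a,b|x,y)$. Assign symbolic projectors $E^x_a$ (Alice) and $F^y_b$ (Bob) to each local event $(x,a)$, $(y,b)$; $A$ and $B$ denote the sets of Alice's and Bob's projectors. They can be conjugated and multiplied formally, every $F$ commutes with every $E$, and a product of two consecutive projectors corresponding to different outcomes of the same measurement equals 0. $A^mB^n$ denotes the set of all products $E^{x_1}_{a_1}\cdots E^{x_{m'}}_{a_{m'}}F^{y_1}_{b_1}\cdots F^{y_{n'}}_{b_{n'}}$ with $m'\leq m$, $n'\leq n$ (taking $m'=n'=0$ gives the identity $1$). ${\cal O}$ is a (symmetric) union of sets of this type containing $A$ and $B$; $\overline{{\cal O}}$ is the real span of ${\cal O}$ and $\overline{{\cal O}}^2$ the real span of products of two elements of ${\cal O}$. A no-signalling distribution $P(a,b|x,y)$ is ${\cal O}$-positive if there exists a linear functional $L:\overline{{\cal O}}^2\to\mathbb{R}$ with $L(1)=1$, $L(ff^\dagger)\geq 0$ for all $f\in\overline{{\cal O}}$, and $P(a,b|x,y)=L(E^x_aF^y_b)$. A set of boxes is closed under wirings if, for any finite collection of boxes from the set and any pair of local wirings (each party sequentially chooses which of its local boxes to probe and with which input as a function of its effective input and previously obtained outputs, and then post-processes the obtained outputs into an effective output), the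 resulting effective box belongs to the set. *)

theory Defs
  imports Complex_Main
begin

text \<open>A bipartite scenario: Alice's inputs are 0..<nX, outputs 0..<nA;
  Bob's inputs 0..<nY, outputs 0..<nB (all alphabets finite and nonempty).
  A box is P a b x y = P(a,b|x,y).\<close>

definition is_box :: "nat \<Rightarrow> nat \<Rightarrow> nat \<Rightarrow> nat \<Rightarrow> (nat \<Rightarrow> nat \<Rightarrow> nat \<Rightarrow> nat \<Rightarrow> real) \<Rightarrow> bool" where
  "is_box nX nA nY nB P \<longleftrightarrow>
     0 < nX \<and> 0 < nA \<and> 0 < nY \<and> 0 < nB \<and>
     (\<forall>a<nA. \<forall>b<nB. \<forall>x<nX. \<forall>y<nY. 0 \<le> P a b x y) \<and>
     (\<forall>x<nX. \<forall>y<nY. (\<Sum>a<nA. \<Sum>b<nB. P a b x y) = 1) \<and>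
     (\<forall>a<nA. \<forall>x<nX. \<forall>y<nY. \<forall>y'<nY. (\<Sum>b<nB. P a b x y) = (\<Sum>b<nB. P a b x y')) \<and>
     (\<forall>b<nB. \<forall>y<nY. \<forall>x<nX. \<forall>x'<nX. (\<Sum>a<nA. P a b x y) = (\<Sum>a<nA. P a b x' y))"

text \<open>A letter (x,a) stands for E^x_a (resp. (y,b) for F^y_b).  Since every F commutes
  with every E, a product of projectors is represented by a pair (Alice word, Bob word).\<close>

type_synonym word = "(nat \<times> nat) list \<times> (nat \<times> nat) list"

text \<open>Normal form of a one-party word modulo E E = E (projectors) and
  E^x_a E^x_a' = 0 for a \<noteq> a'; None represents 0.\<close>

fun red :: "(nat \<times> nat) list \<Rightarrow> (nat \<times> nat) list option" where
  "red [] = Some []"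
| "red (p # w) = (case red w of
      None \<Rightarrow> None
    | Some [] \<Rightarrow> Some [p]
    | Some (q # r) \<Rightarrow> (if p = q then Some (q # r)
                       else if fst p = fst q then None else Some (p # q # r)))"

definition red_word :: "word \<Rightarrow> word option" where
  "red_word w = (case (red (fst w), red (snd w)) of
      (Some u, Some v) \<Rightarrow> Some (u, v) | _ \<Rightarrow> None)"

definition wmult :: "word \<Rightarrow> word \<Rightarrow> word" where
  "wmult u v = (fst u @ fst v, snd u @ snd v)"

definition wadj :: "word \<Rightarrow> word" where
  "wadj u = (rev (fst u), rev (snd u))"

text \<open>A linear functional on the span of monomials is given by its values on the
  (nonzero, reduced) monomials; it is evaluated on a word through its normal form.\<close>

definition evL :: "(word \<Rightarrow> real) \<Rightarrow> word \<Rightarrow> real" where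
  "evL L w = (case red_word w of None \<Rightarrow> 0 | Some m \<Rightarrow> L m)"

definition AmBn :: "nat \<Rightarrow> nat \<Rightarrow> nat \<Rightarrow> nat \<Rightarrow> nat \<Rightarrow> nat \<Rightarrow> word set" where
  "AmBn m n nX nA nY nB = {(u, v). length u \<le> m \<and> length v \<le> n \<and>
      set u \<subseteq> {0..<nX} \<times> {0..<nA} \<and> set v \<subseteq> {0..<nY} \<times> {0..<nB}}"

definition Oset :: "(nat \<times> nat) set \<Rightarrow> nat \<Rightarrow> nat \<Rightarrow> nat \<Rightarrow> nat \<Rightarrow> word set" where
  "Oset S nX nA nY nB = (\<Union>(m, n)\<in>S. AmBn m n nX nA nY nB)"

definition O_positive :: "(nat \<times> nat) set \<Rightarrow> nat \<Rightarrow> nat \<Rightarrow> nat \<Rightarrow> nat \<Rightarrow>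
    (nat \<Rightarrow> nat \<Rightarrow> nat \<Rightarrow> nat \<Rightarrow> real) \<Rightarrow> bool" where
  "O_positive S nX nA nY nB P \<longleftrightarrow> is_box nX nA nY nB P \<and>
     (\<exists>L :: word \<Rightarrow> real.
        L ([], []) = 1 \<and>
        (\<forall>W c. finite W \<and> W \<subseteq> Oset S nX nA nY nB \<longrightarrow>
            0 \<le> (\<Sum>u\<in>W. \<Sum>v\<in>W. c u * c v * evL L (wmult u (wadj v)))) \<and>
        (\<forall>a<nA. \<forall>b<nB. \<forall>x<nX. \<forall>y<nY. P a b x y = evL L ([(x, a)], [(y, b)])))"

text \<open>k boxes, box i has alphabets nX i, nA i, nY i, nB i and distribution P i.
  A local history is the list of (box, (input, output)) in chronological order.
  A local wiring: nxt chi h = Some (i, x) means "probe box i with input x" given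
  effective input chi and history h; None means stop.  out chi h is the effective output.\<close>

type_synonym hist = "(nat \<times> (nat \<times> nat)) list"

definition wiring_wf :: "nat \<Rightarrow> (nat \<Rightarrow> nat) \<Rightarrow> nat \<Rightarrow> nat \<Rightarrow>
    (nat \<Rightarrow> hist \<Rightarrow> (nat \<times> nat) option) \<Rightarrow> (nat \<Rightarrow> hist \<Rightarrow> nat) \<Rightarrow> bool" where
  "wiring_wf k nIn nIn' nOut' nxt out \<longleftrightarrow>
     (\<forall>chi<nIn'. \<forall>h. (\<forall>i x. nxt chi h = Some (i, x) \<longrightarrow>
                           i < k \<and> i \<notin> fst ` set h \<and> x < nIn i)
                     \<and> out chi h < nOut')"

definition complete_hist :: "(nat \<Rightarrow> nat) \<Rightarrow> (nat \<Rightarrow> hist \<Rightarrow> (nat \<times> nat) option) \<Rightarrow>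
    nat \<Rightarrow> hist \<Rightarrow> bool" where
  "complete_hist nOut nxt chi h \<longleftrightarrow>
     (\<forall>t<length h. nxt chi (take t h) = Some (fst (h ! t), fst (snd (h ! t)))
                  \<and> snd (snd (h ! t)) < nOut (fst (h ! t)))
     \<and> nxt chi h = None"

definition box_factor :: "(nat \<Rightarrow> nat) \<Rightarrow> (nat \<Rightarrow> nat) \<Rightarrow>
    (nat \<Rightarrow> nat \<Rightarrow> nat \<Rightarrow> nat \<Rightarrow> nat \<Rightarrow> real) \<Rightarrow> hist \<Rightarrow> hist \<Rightarrow> nat \<Rightarrow> real" where
  "box_factor nA nB P hA hB i = (case (map_of hA i, map_of hB i) of
       (Some (x, a), Some (y, b)) \<Rightarrow> P i a b x y
     | (Some (x, a), None) \<Rightarrow> (\<Sum>b<nB i. P i a b x 0)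
     | (None, Some (y, b)) \<Rightarrow> (\<Sum>a<nA i. P i a b 0 y)
     | (None, None) \<Rightarrow> 1)"

definition wired_box :: "nat \<Rightarrow> (nat \<Rightarrow> nat) \<Rightarrow> (nat \<Rightarrow> nat) \<Rightarrow>
    (nat \<Rightarrow> nat \<Rightarrow> nat \<Rightarrow> nat \<Rightarrow> nat \<Rightarrow> real) \<Rightarrow>
    (nat \<Rightarrow> hist \<Rightarrow> (nat \<times> nat) option) \<Rightarrow> (nat \<Rightarrow> hist \<Rightarrow> nat) \<Rightarrow>
    (nat \<Rightarrow> hist \<Rightarrow> (nat \<times> nat) option) \<Rightarrow> (nat \<Rightarrow> hist \<Rightarrow> nat) \<Rightarrow>
    nat \<Rightarrow> nat \<Rightarrow> nat \<Rightarrow> nat \<Rightarrow> real" where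
  "wired_box k nA nB P nxtA outA nxtB outB = (\<lambda>alpha beta chi ups.
     \<Sum>hA\<in>{h. complete_hist nA nxtA chi h}. \<Sum>hB\<in>{h. complete_hist nB nxtB ups h}.
       (if outA chi hA = alpha \<and> outB ups hB = beta
        then (\<Prod>i<k. box_factor nA nB P hA hB i) else 0))"

end

theory Submission
  imports Defs
begin

text \<open>Each box i comes with an O-positive functional L_i. The wired box gets the functional that
  evaluates a monomial of effective projectors by summing, over all runs of the two wirings that
  produce the prescribed effective inputs and outputs, the product over the boxes of L_i applied to
  the projectors that box i receives along the runs. This functional respects the projector
  relations: a repeated effective projector forces the same run, since two different runs on one
  input clash in some box. On E^x_a F^y_b it gives the probability of the wired box. Finally every
  box receives at most as many projectors as the monomial contains, so on O the moment matrix of the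
  new functional is a sum of entrywise products of moment matrices of the L_i, which is positive
  semidefinite by the Schur product theorem.\<close>

section \<open>Normal forms of words\<close>

definition clash_free :: "(nat \<times> nat) list \<Rightarrow> bool" where
  "clash_free w = successively (\<lambda>p q. fst p = fst q \<longrightarrow> p = q) w"

lemma red_eq: "red w = (if clash_free w then Some (remdups_adj w) else None)"
proof (induction w)
  case Nil
  then show ?case by (simp add: clash_free_def)
next
  case (Cons p w)
  then show ?case
    by (cases w) (auto simp: clash_free_def remdups_adj_Cons split: list.splits)
qed

lemma clash_free_rev [simp]: "clash_free (rev w) = clash_free w"
  unfolding clash_free_def by (simp add: eq_commute)

lemma clash_free_dup: "clash_free (u @ p # p # v) = clash_free (u @ p # v)"
  unfolding clash_free_def by (simp add: successively_append_iff)

lemma not_clash_free_clash: "fst p = fst q \<Longrightarrow> p \<noteq> q \<Longrightarrow> \<not> clash_free (u @ p # q # v)"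
  unfolding clash_free_def by (simp add: successively_append_iff)

lemma not_clash_free_iff_nth:
  "\<not> clash_free w \<longleftrightarrow> (\<exists>n. Suc n < length w \<and> fst (w ! n) = fst (w ! Suc n) \<and> w ! n \<noteq> w ! Suc n)"
  unfolding clash_free_def successively_conv_nth by blast

lemma remdups_adj_dup: "remdups_adj (u @ p # p # v) = remdups_adj (u @ p # v)"
  by (induction u) (simp, simp add: remdups_adj_Cons)

lemma remdups_adj_id:
  "(\<And>n. Suc n < length w \<Longrightarrow> w ! n \<noteq> w ! Suc n) \<Longrightarrow> remdups_adj w = w"
  by (simp add: distinct_adj_altdef[symmetric] distinct_adj_conv_nth)

lemma red_dup: "length l \<le> 1 \<Longrightarrow> red (u @ l @ l @ v) = red (u @ l @ v)"
  by (cases l) (auto simp: red_eq clash_free_dup remdups_adj_dup)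

lemma red_word_eq:
  "red_word w = (if clash_free (fst w) \<and> clash_free (snd w)
     then Some (remdups_adj (fst w), remdups_adj (snd w)) else None)"
  by (simp add: red_word_def red_eq)

lemma red_word_wadj: "red_word (wadj w) = map_option wadj (red_word w)"
  by (simp add: red_word_eq wadj_def)

lemma wadj_wmult: "wadj (wmult u (wadj v)) = wmult v (wadj u)"
  by (simp add: wadj_def wmult_def)

lemma evL_eq_0_left: "\<not> clash_free u \<Longrightarrow> evL L (u, v) = 0"
  by (simp add: evL_def red_word_eq)

lemma evL_eq_0_right: "\<not> clash_free v \<Longrightarrow> evL L (u, v) = 0"
  by (simp add: evL_def red_word_eq)

lemma evL_cong_left: "red u = red u' \<Longrightarrow> evL L (u, v) = evL L (u', v)"
  by (simp add: evL_def red_word_def)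

lemma evL_cong_right: "red v = red v' \<Longrightarrow> evL L (u, v) = evL L (u, v')"
  by (simp add: evL_def red_word_def)

section \<open>Positive semidefinite kernels\<close>

definition psd_kernel :: "'j set \<Rightarrow> ('j \<Rightarrow> 'j \<Rightarrow> real) \<Rightarrow> bool" where
  "psd_kernel J K \<longleftrightarrow> (\<forall>d. 0 \<le> (\<Sum>j\<in>J. \<Sum>j'\<in>J. d j * d j' * K j j'))"

definition sym_kernel :: "'j set \<Rightarrow> ('j \<Rightarrow> 'j \<Rightarrow> real) \<Rightarrow> bool" where
  "sym_kernel J K \<longleftrightarrow> (\<forall>j\<in>J. \<forall>j'\<in>J. K j j' = K j' j)"

lemma psd_kernelD: "psd_kernel J K \<Longrightarrow> 0 \<le> (\<Sum>j\<in>J. \<Sum>j'\<in>J. d j * d j' * K j j')"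
  unfolding psd_kernel_def by blast

lemma psd_kernel_subset:
  assumes "finite J'" "J \<subseteq> J'" "psd_kernel J' K"
  shows "psd_kernel J K"
  unfolding psd_kernel_def
proof
  fix d :: "'a \<Rightarrow> real"
  let ?d = "\<lambda>j. if j \<in> J then d j else 0"
  have "(\<Sum>j\<in>J. \<Sum>j'\<in>J. d j * d j' * K j j') = (\<Sum>j\<in>J'. \<Sum>j'\<in>J'. ?d j * ?d j' * K j j')"
    using assms(1,2) by (simp add: if_distrib if_distribR sum.If_cases Int_absorb1)
  also have "0 \<le> \<dots>"
    using assms(3) by (rule psd_kernelD)
  finally show "0 \<le> (\<Sum>j\<in>J. \<Sum>j'\<in>J. d j * d j' * K j j')" .
qed

lemma sum_delta_mult:
  "finite I \<Longrightarrow> j \<in> I \<Longrightarrow> (\<Sum>i\<in>I. (if i = j then c else 0) * f i) = c * (f j :: real)"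
  by (subst sum.cong[OF refl, of _ _ "\<lambda>i. if i = j then c * f j else 0"]) auto

lemma sum_sum_delta_mult:
  assumes "finite I" "j \<in> I"
  shows "(\<Sum>i\<in>I. \<Sum>i'\<in>I. (if i = j then c else 0) * (if i' = j then c else 0) * K i i')
    = c * c * (K j j :: real)"
proof -
  have "(\<Sum>i'\<in>I. (if i = j then c else 0) * (if i' = j then c else 0) * K i i')
      = (if i = j then c else 0) * (c * K i j)" for i
    using sum_delta_mult[OF assms, of c "K i"]
    by (simp add: sum_distrib_left[symmetric] mult.assoc del: sum_distrib_left)
  then show ?thesis
    using sum_delta_mult[OF assms, of c "\<lambda>i. c * K i j"] by simp
qed

lemma quadratic_form_add_delta:
  fixes K :: "'j \<Rightarrow> 'j \<Rightarrow> real"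
  assumes "finite I" "a \<in> I" "sym_kernel I K"
  shows "(\<Sum>j\<in>I. \<Sum>j'\<in>I. (d j + (if j = a then l else 0)) * (d j' + (if j' = a then l else 0))
      * K j j') = (\<Sum>j\<in>I. \<Sum>j'\<in>I. d j * d j' * K j j') + 2 * l * (\<Sum>j\<in>I. d j * K j a) + l * l * K a a"
proof -
  have e: "(d j + (if j = a then l else 0)) * (d j' + (if j' = a then l else 0)) * K j j'
     = d j * d j' * K j j' + (if j' = a then l * d j * K j a else 0)
       + (if j = a then l * d j' * K a j' else 0)
       + (if j = a then (if j' = a then l * l * K a a else 0) else 0)" for j j'
    by (auto simp: algebra_simps)
  have s: "(\<Sum>j'\<in>I. d j' * K a j') = (\<Sum>j\<in>I. d j * K j a)"
    using assms(3,2) unfolding sym_kernel_def by (intro sum.cong) auto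
  have "(\<Sum>j\<in>I. \<Sum>j'\<in>I. (d j + (if j = a then l else 0)) * (d j' + (if j' = a then l else 0))
      * K j j') = (\<Sum>j\<in>I. \<Sum>j'\<in>I. d j * d j' * K j j')
      + (\<Sum>j\<in>I. \<Sum>j'\<in>I. (if j' = a then l * d j * K j a else 0))
      + (\<Sum>j\<in>I. \<Sum>j'\<in>I. (if j = a then l * d j' * K a j' else 0))
      + (\<Sum>j\<in>I. \<Sum>j'\<in>I. (if j = a then (if j' = a then l * l * K a a else 0) else 0))"
    unfolding e by (simp only: sum.distrib)
  also have "(\<Sum>j\<in>I. \<Sum>j'\<in>I. (if j' = a then l * d j * K j a else 0)) = l * (\<Sum>j\<in>I. d j * K j a)"
    using assms(1,2) by (simp add: sum.delta' sum_distrib_left algebra_simps)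
  also have "(\<Sum>j\<in>I. \<Sum>j'\<in>I. (if j = a then l * d j' * K a j' else 0))
      = (\<Sum>j\<in>I. if j = a then (\<Sum>j'\<in>I. l * d j' * K a j') else 0)"
    by (intro sum.cong refl) auto
  also have "\<dots> = l * (\<Sum>j\<in>I. d j * K j a)"
    using assms(1,2) s by (simp add: sum.delta' mult.assoc flip: sum_distrib_left)
  also have "(\<Sum>j\<in>I. \<Sum>j'\<in>I. (if j = a then (if j' = a then l * l * K a a else 0) else 0))
      = (\<Sum>j\<in>I. if j = a then l * l * K a a else 0)"
    using assms(1,2) by (intro sum.cong refl) (simp add: sum.delta')
  also have "\<dots> = l * l * K a a"
    using assms(1,2) by (simp add: sum.delta')
  finally show ?thesis by simp
qed

lemma psd_kernel_diag_nonneg: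
  assumes "finite J" "a \<in> J" "sym_kernel J K" "psd_kernel J K"
  shows "0 \<le> K a a"
  using psd_kernelD[OF assms(4), of "\<lambda>j. 0 + (if j = a then 1 else 0)"]
    quadratic_form_add_delta[OF assms(1-3), of "\<lambda>_. 0" 1]
  by simp

lemma linear_coeff_eq_0:
  fixes D l :: real
  assumes "\<And>z. 0 \<le> 2 * z * D + z * z * l"
  shows "D = 0"
proof (rule ccontr)
  assume "D \<noteq> 0"
  then have D: "0 < D * D"
    by (auto simp: zero_less_mult_iff linorder_neq_iff)
  show False
  proof (cases "l \<le> 0")
    case True
    have "2 * (- D) * D + (- D) * (- D) * l = - (D * D * (2 - l))"
      by (simp add: algebra_simps)
    moreover have "0 < D * D * (2 - l)"
      using D True by simp
    ultimately show False
      using assms[of "- D"] by linarith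
  next
    case False
    have "2 * (- D / l) * D + (- D / l) * (- D / l) * l = - (D * D / l)"
      using False by (simp add: field_simps)
    moreover have "0 < D * D / l"
      using D False by simp
    ultimately show False
      using assms[of "- D / l"] by linarith
  qed
qed

lemma psd_kernel_row_eq_0:
  assumes "finite J" "a \<in> J" "j \<in> J" "sym_kernel J K" "psd_kernel J K" "K a a = 0"
  shows "K j a = 0"
proof (rule linear_coeff_eq_0)
  fix z
  have "0 \<le> (\<Sum>i\<in>J. \<Sum>i'\<in>J. ((if i = j then z else 0) + (if i = a then 1 else 0))
                             * ((if i' = j then z else 0) + (if i' = a then 1 else 0)) * K i i')"
    using assms(5) by (rule psd_kernelD)
  also have "\<dots> = z * z * K j j + 2 * (z * K j a)"
    using assms
    by (simp add: quadratic_form_add_delta sum_delta_mult sum_sum_delta_mult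
        del: mult_zero_left)
  finally show "0 \<le> 2 * z * K j a + z * z * K j j"
    by (simp add: algebra_simps)
qed

lemma psd_kernel_schur_complement:
  assumes "finite J" "a \<in> J" "sym_kernel J K" "psd_kernel J K"
  shows "psd_kernel J (\<lambda>j j'. K j j' - K j a * K j' a / K a a)"
proof (cases "K a a = 0")
  case True
  then show ?thesis using assms(4) by simp
next
  case False
  then have pos: "0 < K a a"
    using psd_kernel_diag_nonneg[OF assms] by simp
  show ?thesis
    unfolding psd_kernel_def
  proof
    fix d
    define s where "s = (\<Sum>j\<in>J. d j * K j a)"
    have "0 \<le> (\<Sum>j\<in>J. \<Sum>j'\<in>J. (d j + (if j = a then - s / K a a else 0))
                               * (d j' + (if j' = a then - s / K a a else 0)) * K j j')"
      using assms(4) by (rule psd_kernelD)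
    also have "\<dots> = (\<Sum>j\<in>J. \<Sum>j'\<in>J. d j * d j' * K j j') - s * s / K a a"
      unfolding quadratic_form_add_delta[OF assms(1-3)] s_def[symmetric]
      using pos by (simp add: field_simps)
    also have "s * s / K a a = (\<Sum>j\<in>J. \<Sum>j'\<in>J. d j * d j' * (K j a * K j' a / K a a))"
      unfolding s_def by (simp add: sum_product sum_divide_distrib algebra_simps)
    finally show "0 \<le> (\<Sum>j\<in>J. \<Sum>j'\<in>J. d j * d j' * (K j j' - K j a * K j' a / K a a))"
      by (simp add: algebra_simps sum_subtractf)
  qed
qed

lemma psd_kernel_gram:
  assumes "finite J" "sym_kernel J K" "psd_kernel J K"
  shows "\<exists>n (\<phi> :: nat \<Rightarrow> 'j \<Rightarrow> real). \<forall>j\<in>J. \<forall>j'\<in>J. K j j' = (\<Sum>r<n. \<phi> r j * \<phi> r j')"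
  using assms
proof (induction J arbitrary: K rule: finite_induct)
  case empty
  then show ?case by auto
next
  case (insert a J)
  let ?I = "insert a J"
  define K' where "K' j j' = K j j' - K j a * K j' a / K a a" for j j'
  have "psd_kernel ?I K'"
    unfolding K'_def by (rule psd_kernel_schur_complement) (use insert in auto)
  then have psd: "psd_kernel J K'"
    by (rule psd_kernel_subset[rotated 2]) (use insert.hyps in auto)
  have sym: "K j j' = K j' j" if "j \<in> ?I" "j' \<in> ?I" for j j'
    using insert.prems(1) that unfolding sym_kernel_def by blast
  then have sym': "sym_kernel J K'"
    unfolding sym_kernel_def K'_def by (simp add: mult.commute)
  obtain n :: nat and \<phi> where \<phi>: "\<forall>j\<in>J. \<forall>j'\<in>J. K' j j' = (\<Sum>r<n. \<phi> r j * \<phi> r j')"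
    using insert.IH[OF sym' psd] by blast
  define \<psi> where
    "\<psi> r j = (if r = 0 then K j a / sqrt (K a a) else if j = a then 0 else \<phi> (r - 1) j)"
    for r j
  have Kaa: "0 \<le> K a a"
    by (rule psd_kernel_diag_nonneg[of ?I]) (use insert in auto)
  have row: "K j a = 0" if "K a a = 0" "j \<in> ?I" for j
    by (rule psd_kernel_row_eq_0[of ?I]) (use insert that in auto)
  have sym: "K j j' = K j' j" if "j \<in> ?I" "j' \<in> ?I" for j j'
    using insert.prems(1) that unfolding sym_kernel_def by blast
  have "K j j' = (\<Sum>r<Suc n. \<psi> r j * \<psi> r j')" if j: "j \<in> ?I" and j': "j' \<in> ?I" for j j'
  proof -
    have "\<psi> 0 j * \<psi> 0 j' = K j a * K j' a / (sqrt (K a a) * sqrt (K a a))"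
      by (simp add: \<psi>_def)
    also have "sqrt (K a a) * sqrt (K a a) = K a a"
      using Kaa by simp
    finally have sum: "(\<Sum>r<Suc n. \<psi> r j * \<psi> r j')
        = K j a * K j' a / K a a + (\<Sum>r<n. \<psi> (Suc r) j * \<psi> (Suc r) j')"
      unfolding sum.lessThan_Suc_shift by simp
    show ?thesis
    proof (cases "j = a \<or> j' = a")
      case True
      have "K j j' = K j a * K j' a / K a a"
      proof (cases "K a a = 0")
        case True
        then show ?thesis
          using \<open>j = a \<or> j' = a\<close> row[OF True j] row[OF True j'] sym[OF j' insertI1]
          by auto
      next
        case False
        then show ?thesis
          using \<open>j = a \<or> j' = a\<close> sym[OF j' insertI1] sym[OF j insertI1] by auto
      qed
      then show ?thesis
        unfolding sum using True by (auto simp: \<psi>_def)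
    next
      case False
      then have "K j j' - K j a * K j' a / K a a = (\<Sum>r<n. \<phi> r j * \<phi> r j')"
        using \<phi> j j' unfolding K'_def by auto
      then show ?thesis
        unfolding sum using False by (simp add: \<psi>_def algebra_simps)
    qed
  qed
  then show ?case by blast
qed

text \<open>Schur product theorem, via a Gram decomposition of the second factor.\<close>

lemma psd_kernel_mult:
  assumes "finite J" "psd_kernel J K1" "sym_kernel J K2" "psd_kernel J K2"
  shows "psd_kernel J (\<lambda>j j'. K1 j j' * K2 j j')"
  unfolding psd_kernel_def
proof
  fix d
  obtain n :: nat and \<phi> where \<phi>: "\<forall>j\<in>J. \<forall>j'\<in>J. K2 j j' = (\<Sum>r<n. \<phi> r j * \<phi> r j')"
    using psd_kernel_gram[OF assms(1,3,4)] by blast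
  have "(\<Sum>j\<in>J. \<Sum>j'\<in>J. d j * d j' * (K1 j j' * K2 j j'))
     = (\<Sum>j\<in>J. \<Sum>j'\<in>J. \<Sum>r<n. (d j * \<phi> r j) * (d j' * \<phi> r j') * K1 j j')"
    using \<phi> by (intro sum.cong refl) (simp add: sum_distrib_left sum_distrib_right algebra_simps)
  also have "\<dots> = (\<Sum>r<n. \<Sum>j\<in>J. \<Sum>j'\<in>J. (d j * \<phi> r j) * (d j' * \<phi> r j') * K1 j j')"
    by (simp add: sum.swap[of _ "{..<n}"])
  also have "0 \<le> \<dots>"
    using assms(2) by (intro sum_nonneg psd_kernelD)
  finally show "0 \<le> (\<Sum>j\<in>J. \<Sum>j'\<in>J. d j * d j' * (K1 j j' * K2 j j'))" .
qed

lemma psd_kernel_prod: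
  assumes "finite J" "\<And>i. i \<in> I \<Longrightarrow> sym_kernel J (K i) \<and> psd_kernel J (K i)" "finite I"
  shows "psd_kernel J (\<lambda>j j'. \<Prod>i\<in>I. K i j j')"
  using assms(3,2)
proof (induction I rule: finite_induct)
  case empty
  have "(\<Sum>j\<in>J. \<Sum>j'\<in>J. d j * d j') = (\<Sum>j\<in>J. d j) * (\<Sum>j\<in>J. d j)" for d :: "'a \<Rightarrow> real"
    by (simp add: sum_product)
  then show ?case
    unfolding psd_kernel_def by simp
next
  case (insert i I)
  then have "psd_kernel J (\<lambda>j j'. (\<Prod>i\<in>I. K i j j') * K i j j')"
    by (intro psd_kernel_mult[OF assms(1)]) auto
  then show ?case
    using insert.hyps by (simp add: mult.commute)
qed

section \<open>Positive functionals\<close>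

definition positive_on :: "word set \<Rightarrow> (word \<Rightarrow> real) \<Rightarrow> bool" where
  "positive_on Os L \<longleftrightarrow> (\<forall>W c. finite W \<and> W \<subseteq> Os \<longrightarrow>
     0 \<le> (\<Sum>u\<in>W. \<Sum>v\<in>W. c u * c v * evL L (wmult u (wadj v))))"

lemma psd_kernel_of_positive_on:
  assumes pos: "positive_on Os L" and fin: "finite J" and sub: "g ` J \<subseteq> Os"
  shows "psd_kernel J (\<lambda>j j'. evL L (wmult (g j) (wadj (g j'))))"
  unfolding psd_kernel_def
proof
  fix d :: "'a \<Rightarrow> real"
  define c where "c w = (\<Sum>j\<in>{x\<in>J. g x = w}. d j)" for w
  have group: "(\<Sum>j\<in>J. d j * F (g j)) = (\<Sum>w\<in>g ` J. c w * F w)" for F :: "word \<Rightarrow> real"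
  proof -
    have "(\<Sum>j\<in>J. d j * F (g j)) = (\<Sum>w\<in>g ` J. \<Sum>j\<in>{x\<in>J. g x = w}. d j * F (g j))"
      by (rule sum.image_gen[OF fin])
    then show ?thesis
      unfolding c_def sum_distrib_right by simp
  qed
  have "(\<Sum>j\<in>J. \<Sum>j'\<in>J. d j * d j' * evL L (wmult (g j) (wadj (g j'))))
     = (\<Sum>j\<in>J. d j * (\<Sum>j'\<in>J. d j' * evL L (wmult (g j) (wadj (g j')))))"
    by (simp add: sum_distrib_left mult.assoc)
  also have "\<dots> = (\<Sum>j\<in>J. d j * (\<Sum>v\<in>g ` J. c v * evL L (wmult (g j) (wadj v))))"
    using group[of "\<lambda>v. evL L (wmult _ (wadj v))"] by simp
  also have "\<dots> = (\<Sum>u\<in>g ` J. c u * (\<Sum>v\<in>g ` J. c v * evL L (wmult u (wadj v))))"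
    by (rule group)
  also have "\<dots> = (\<Sum>u\<in>g ` J. \<Sum>v\<in>g ` J. c u * c v * evL L (wmult u (wadj v)))"
    by (simp add: sum_distrib_left mult.assoc)
  also have "0 \<le> \<dots>"
    using pos fin sub unfolding positive_on_def by blast
  finally show "0 \<le> (\<Sum>j\<in>J. \<Sum>j'\<in>J. d j * d j' * evL L (wmult (g j) (wadj (g j'))))" .
qed

text \<open>Symmetrising keeps positivity and makes the kernels below symmetric, as the Gram decomposition
  requires; the box probabilities are unaffected since they are values on self-adjoint monomials.\<close>

definition sym_part :: "(word \<Rightarrow> real) \<Rightarrow> word \<Rightarrow> real" where
  "sym_part L m = (L m + L (wadj m)) / 2"

lemma evL_sym_part: "evL (sym_part L) w = (evL L w + evL L (wadj w)) / 2"
  by (auto simp: evL_def sym_part_def red_word_wadj split: option.splits)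

lemma evL_sym_part_self_adjoint: "wadj w = w \<Longrightarrow> evL (sym_part L) w = evL L w"
  by (simp add: evL_sym_part)

lemma sym_kernel_sym_part: "sym_kernel J (\<lambda>j j'. evL (sym_part L) (wmult (g j) (wadj (g j'))))"
  unfolding sym_kernel_def evL_sym_part by (simp add: wadj_wmult)

lemma positive_on_sym_part:
  assumes "positive_on Os L"
  shows "positive_on Os (sym_part L)"
  unfolding positive_on_def
proof (intro allI impI)
  fix W c assume W: "finite W \<and> W \<subseteq> Os"
  let ?Q = "\<lambda>L. \<Sum>u\<in>W. \<Sum>v\<in>W. c u * c v * evL L (wmult u (wadj v))"
  have swap: "(\<Sum>u\<in>W. \<Sum>v\<in>W. c u * c v * evL L (wmult v (wadj u))) = ?Q L"
    by (subst sum.swap) (simp add: mult.commute)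
  have "?Q (sym_part L) = (?Q L + (\<Sum>u\<in>W. \<Sum>v\<in>W. c u * c v * evL L (wmult v (wadj u)))) / 2"
    unfolding evL_sym_part wadj_wmult
    by (simp add: sum.distrib sum_divide_distrib add_divide_distrib ring_distribs)
  also have "\<dots> = ?Q L"
    unfolding swap by simp
  also have "0 \<le> ?Q L"
    using assms W unfolding positive_on_def by blast
  finally show "0 \<le> ?Q (sym_part L)" .
qed

text \<open>The test vectors 1, E^x_a and F^y_b, indexed by unit + outcomes of Alice + outcomes of Bob.\<close>

definition marg_index :: "nat \<Rightarrow> nat \<Rightarrow> (unit + nat + nat) set" where
  "marg_index nA nB = insert (Inl ()) (Inr ` (Inl ` {..<nA} \<union> Inr ` {..<nB}))"

definition marg_word :: "nat \<Rightarrow> nat \<Rightarrow> unit + nat + nat \<Rightarrow> word" where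
  "marg_word x y j = (case j of
      Inl _ \<Rightarrow> ([], []) | Inr (Inl a) \<Rightarrow> ([(x, a)], []) | Inr (Inr b) \<Rightarrow> ([], [(y, b)]))"

definition marg_coeff :: "real \<Rightarrow> (nat \<Rightarrow> real) \<Rightarrow> (nat \<Rightarrow> real) \<Rightarrow> unit + nat + nat \<Rightarrow> real" where
  "marg_coeff \<gamma> e f j = (case j of Inl _ \<Rightarrow> \<gamma> | Inr (Inl a) \<Rightarrow> e a | Inr (Inr b) \<Rightarrow> f b)"

lemma finite_marg_index: "finite (marg_index nA nB)"
  unfolding marg_index_def by simp

lemma sum_marg_index:
  "(\<Sum>j\<in>marg_index nA nB. h j) = h (Inl ()) + (\<Sum>a<nA. h (Inr (Inl a))) + (\<Sum>b<nB. h (Inr (Inr b)))"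
proof -
  have "(\<Sum>j\<in>marg_index nA nB. h j) = h (Inl ()) + (\<Sum>j\<in>Inl ` {..<nA} \<union> Inr ` {..<nB}. h (Inr j))"
    unfolding marg_index_def by (subst sum.insert) (auto simp: sum.reindex)
  also have "\<dots> = h (Inl ()) + ((\<Sum>a<nA. h (Inr (Inl a))) + (\<Sum>b<nB. h (Inr (Inr b))))"
    by (subst sum.union_disjoint) (auto simp: sum.reindex)
  finally show ?thesis by (simp add: add.assoc)
qed

lemma evL_marg_word_products:
  "evL L (wmult ([], []) (wadj ([], []))) = L ([], [])"
  "evL L (wmult ([], []) (wadj ([(x, a)], []))) = evL L ([(x, a)], [])"
  "evL L (wmult ([(x, a)], []) (wadj ([], []))) = evL L ([(x, a)], [])"
  "evL L (wmult ([], []) (wadj ([], [(y, b)]))) = evL L ([], [(y, b)])"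
  "evL L (wmult ([], [(y, b)]) (wadj ([], []))) = evL L ([], [(y, b)])"
  "evL L (wmult ([(x, a)], []) (wadj ([(x, a')], [])))
     = (if a = a' then evL L ([(x, a)], []) else 0)"
  "evL L (wmult ([], [(y, b)]) (wadj ([], [(y, b')])))
     = (if b = b' then evL L ([], [(y, b)]) else 0)"
  "evL L (wmult ([(x, a)], []) (wadj ([], [(y, b)]))) = evL L ([(x, a)], [(y, b)])"
  "evL L (wmult ([], [(y, b)]) (wadj ([(x, a)], []))) = evL L ([(x, a)], [(y, b)])"
  by (auto simp: evL_def red_word_def wmult_def wadj_def)

lemma sum_lessThan_mult_delta:
  fixes a n :: nat
  shows "a < n \<Longrightarrow> (\<Sum>a'<n. g a' * (if a = a' then X else 0)) = g a * (X :: real)"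
  by (subst sum.cong[OF refl, of _ _ "\<lambda>a'. if a = a' then g a * X else 0"]) auto

lemma marg_quadratic_form:
  fixes L :: "word \<Rightarrow> real" and x y :: nat
  defines "l a \<equiv> evL L ([(x, a)], [])" and "m b \<equiv> evL L ([], [(y, b)])"
    and "Q a b \<equiv> evL L ([(x, a)], [(y, b)])"
  shows "(\<Sum>j\<in>marg_index nA nB. \<Sum>j'\<in>marg_index nA nB.
            marg_coeff \<gamma> e f j * marg_coeff \<gamma> e f j'
              * evL L (wmult (marg_word x y j) (wadj (marg_word x y j'))))
    = \<gamma> * \<gamma> * L ([], []) + 2 * \<gamma> * (\<Sum>a<nA. e a * l a) + 2 * \<gamma> * (\<Sum>b<nB. f b * m b)
      + (\<Sum>a<nA. e a * e a * l a) + (\<Sum>b<nB. f b * f b * m b) + 2 * (\<Sum>a<nA. \<Sum>b<nB. e a * f b * Q a b)"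
proof -
  define M where "M j j' = evL L (wmult (marg_word x y j) (wadj (marg_word x y j')))" for j j'
  define d where "d = marg_coeff \<gamma> e f"
  have r0: "(\<Sum>j'\<in>marg_index nA nB. d j' * M (Inl ()) j')
      = \<gamma> * L ([], []) + (\<Sum>a<nA. e a * l a) + (\<Sum>b<nB. f b * m b)"
    unfolding sum_marg_index
    by (simp add: d_def M_def marg_coeff_def marg_word_def evL_marg_word_products l_def m_def)
  have r1: "(\<Sum>j'\<in>marg_index nA nB. d j' * M (Inr (Inl a)) j')
      = \<gamma> * l a + e a * l a + (\<Sum>b<nB. f b * Q a b)" if "a < nA" for a
    unfolding sum_marg_index using that
    by (simp add: d_def M_def marg_coeff_def marg_word_def evL_marg_word_products l_def Q_def
        sum_lessThan_mult_delta mult.commute)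
  have r2: "(\<Sum>j'\<in>marg_index nA nB. d j' * M (Inr (Inr b)) j')
      = \<gamma> * m b + (\<Sum>a<nA. e a * Q a b) + f b * m b" if "b < nB" for b
    unfolding sum_marg_index using that
    by (simp add: d_def M_def marg_coeff_def marg_word_def evL_marg_word_products m_def Q_def
        sum_lessThan_mult_delta mult.commute)
  have "(\<Sum>j\<in>marg_index nA nB. \<Sum>j'\<in>marg_index nA nB. d j * d j' * M j j')
      = (\<Sum>j\<in>marg_index nA nB. d j * (\<Sum>j'\<in>marg_index nA nB. d j' * M j j'))"
    by (simp add: sum_distrib_left mult.assoc)
  also have "\<dots> = \<gamma> * (\<gamma> * L ([], []) + (\<Sum>a<nA. e a * l a) + (\<Sum>b<nB. f b * m b))
      + (\<Sum>a<nA. e a * (\<gamma> * l a + e a * l a + (\<Sum>b<nB. f b * Q a b)))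
      + (\<Sum>b<nB. f b * (\<gamma> * m b + (\<Sum>a<nA. e a * Q a b) + f b * m b))"
  proof -
    have "(\<Sum>a<nA. d (Inr (Inl a)) * (\<Sum>j'\<in>marg_index nA nB. d j' * M (Inr (Inl a)) j'))
        = (\<Sum>a<nA. e a * (\<gamma> * l a + e a * l a + (\<Sum>b<nB. f b * Q a b)))"
      by (intro sum.cong refl, subst r1) (simp_all add: d_def marg_coeff_def)
    moreover have "(\<Sum>b<nB. d (Inr (Inr b)) * (\<Sum>j'\<in>marg_index nA nB. d j' * M (Inr (Inr b)) j'))
        = (\<Sum>b<nB. f b * (\<gamma> * m b + (\<Sum>a<nA. e a * Q a b) + f b * m b))"
      by (intro sum.cong refl, subst r2) (simp_all add: d_def marg_coeff_def)
    ultimately show ?thesis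
      unfolding sum_marg_index[of "\<lambda>j. d j * (\<Sum>j'\<in>marg_index nA nB. d j' * M j j')"] r0
      by (simp add: d_def marg_coeff_def)
  qed
  also have "\<dots> = \<gamma> * \<gamma> * L ([], []) + 2 * \<gamma> * (\<Sum>a<nA. e a * l a) + 2 * \<gamma> * (\<Sum>b<nB. f b * m b)
      + (\<Sum>a<nA. e a * e a * l a) + (\<Sum>b<nB. f b * f b * m b) + 2 * (\<Sum>a<nA. \<Sum>b<nB. e a * f b * Q a b)"
  proof -
    have "(\<Sum>b<nB. f b * (\<Sum>a<nA. e a * Q a b)) = (\<Sum>a<nA. \<Sum>b<nB. e a * f b * Q a b)"
      by (simp add: sum_distrib_left sum.swap[of _ "{..<nB}"] mult.assoc mult.left_commute)
    moreover have "(\<Sum>a<nA. e a * (\<Sum>b<nB. f b * Q a b)) = (\<Sum>a<nA. \<Sum>b<nB. e a * f b * Q a b)"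
      by (simp add: sum_distrib_left mult.assoc)
    ultimately show ?thesis
      by (simp add: sum.distrib sum_distrib_left algebra_simps)
  qed
  finally show ?thesis
    unfolding d_def M_def .
qed

text \<open>Testing positivity with 1 - \<Sum>_b F^y_b and 1 - \<Sum>_a E^x_a bounds both marginal sums by 1,
  testing with \<Sum>_a E^x_a - \<Sum>_b F^y_b shows that they add up to 2, and testing with
  1 - \<Sum>_b F^y_b + z E^x_a for all real z makes the linear term in z vanish.\<close>

lemma psd_marg_kernel_marginals:
  fixes L :: "word \<Rightarrow> real" and x y :: nat
  assumes K: "psd_kernel (marg_index nA nB)
      (\<lambda>j j'. evL L (wmult (marg_word x y j) (wadj (marg_word x y j'))))"
    and L1: "L ([], []) = 1"
    and norm: "(\<Sum>a<nA. \<Sum>b<nB. evL L ([(x, a)], [(y, b)])) = 1"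
  shows psd_marg_kernel_marginal_left:
      "a0 < nA \<Longrightarrow> evL L ([(x, a0)], []) = (\<Sum>b<nB. evL L ([(x, a0)], [(y, b)]))"
    and psd_marg_kernel_marginal_right:
      "b0 < nB \<Longrightarrow> evL L ([], [(y, b0)]) = (\<Sum>a<nA. evL L ([(x, a)], [(y, b0)]))"
proof -
  define l where "l a = evL L ([(x, a)], [])" for a
  define m where "m b = evL L ([], [(y, b)])" for b
  define Q where "Q a b = evL L ([(x, a)], [(y, b)])" for a b
  have F: "0 \<le> \<gamma> * \<gamma> + 2 * \<gamma> * (\<Sum>a<nA. e a * l a) + 2 * \<gamma> * (\<Sum>b<nB. f b * m b)
      + (\<Sum>a<nA. e a * e a * l a) + (\<Sum>b<nB. f b * f b * m b) + 2 * (\<Sum>a<nA. \<Sum>b<nB. e a * f b * Q a b)"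
    for \<gamma> e f
    using psd_kernelD[OF K, of "marg_coeff \<gamma> e f"]
    unfolding marg_quadratic_form L1 l_def m_def Q_def by simp
  have "0 \<le> 1 - (\<Sum>b<nB. m b)" and "0 \<le> 1 - (\<Sum>a<nA. l a)"
    using F[of 1 "\<lambda>_. 0" "\<lambda>_. -1"] F[of 1 "\<lambda>_. -1" "\<lambda>_. 0"] by (simp_all add: sum_negf)
  moreover have "0 \<le> (\<Sum>a<nA. l a) + (\<Sum>b<nB. m b) - 2"
    using F[of 0 "\<lambda>_. 1" "\<lambda>_. -1"] norm unfolding Q_def by (simp add: sum_negf)
  ultimately have sum_m: "(\<Sum>b<nB. m b) = 1" and sum_l: "(\<Sum>a<nA. l a) = 1"
    by linarith+
  have delta: "(\<Sum>a<n. (if a = a0 then c else 0) * h a) = c * h a0" if "a0 < n" for a0 n c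
      and h :: "nat \<Rightarrow> real"
    using that by (intro sum_delta_mult) auto
  show "evL L ([(x, a0)], []) = (\<Sum>b<nB. evL L ([(x, a0)], [(y, b)]))" if a0: "a0 < nA"
  proof -
    have "0 \<le> 2 * z * (l a0 - (\<Sum>b<nB. Q a0 b)) + z * z * l a0" for z
    proof -
      let ?e = "\<lambda>a. if a = a0 then z else 0"
      have "0 \<le> 1 + 2 * (\<Sum>a<nA. ?e a * l a) + 2 * (\<Sum>b<nB. - m b)
          + (\<Sum>a<nA. ?e a * ?e a * l a) + (\<Sum>b<nB. m b) + 2 * (\<Sum>a<nA. \<Sum>b<nB. ?e a * - 1 * Q a b)"
        using F[of 1 ?e "\<lambda>_. -1"] by simp
      also have "(\<Sum>a<nA. ?e a * l a) = z * l a0"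
        using delta[OF a0] .
      also have "(\<Sum>a<nA. ?e a * ?e a * l a) = z * z * l a0"
        using delta[OF a0, of z "\<lambda>a. ?e a * l a"] by (simp add: mult.assoc)
      also have "(\<Sum>a<nA. \<Sum>b<nB. ?e a * - 1 * Q a b) = - z * (\<Sum>b<nB. Q a0 b)"
        using delta[OF a0, of z "\<lambda>a. - (\<Sum>b<nB. Q a b)"] by (simp add: sum_distrib_left sum_negf)
      finally show ?thesis
        using sum_m by (simp add: sum_negf algebra_simps)
    qed
    then have "l a0 - (\<Sum>b<nB. Q a0 b) = 0"
      by (rule linear_coeff_eq_0)
    then show ?thesis
      by (simp add: l_def Q_def)
  qed
  show "evL L ([], [(y, b0)]) = (\<Sum>a<nA. evL L ([(x, a)], [(y, b0)]))" if b0: "b0 < nB"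
  proof -
    have "0 \<le> 2 * z * (m b0 - (\<Sum>a<nA. Q a b0)) + z * z * m b0" for z
    proof -
      let ?f = "\<lambda>b. if b = b0 then z else 0"
      have "0 \<le> 1 + 2 * (\<Sum>a<nA. - l a) + 2 * (\<Sum>b<nB. ?f b * m b)
          + (\<Sum>a<nA. l a) + (\<Sum>b<nB. ?f b * ?f b * m b) + 2 * (\<Sum>a<nA. \<Sum>b<nB. - 1 * ?f b * Q a b)"
        using F[of 1 "\<lambda>_. -1" ?f] by simp
      also have "(\<Sum>b<nB. ?f b * m b) = z * m b0"
        using delta[OF b0] .
      also have "(\<Sum>b<nB. ?f b * ?f b * m b) = z * z * m b0"
        using delta[OF b0, of z "\<lambda>b. ?f b * m b"] by (simp add: mult.assoc)
      also have "(\<Sum>a<nA. \<Sum>b<nB. - 1 * ?f b * Q a b) = - z * (\<Sum>a<nA. Q a b0)"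
        using delta[OF b0] by (simp add: sum_distrib_left sum_negf)
      finally show ?thesis
        using sum_l by (simp add: sum_negf algebra_simps)
    qed
    then have "m b0 - (\<Sum>a<nA. Q a b0) = 0"
      by (rule linear_coeff_eq_0)
    then show ?thesis
      by (simp add: m_def Q_def)
  qed
qed

section \<open>Histories of a local wiring\<close>

definition partial_hist :: "(nat \<Rightarrow> nat) \<Rightarrow> (nat \<Rightarrow> hist \<Rightarrow> (nat \<times> nat) option) \<Rightarrow> nat \<Rightarrow> hist \<Rightarrow> bool"
  where "partial_hist nOut nxt chi h \<longleftrightarrow>
    (\<forall>t<length h. nxt chi (take t h) = Some (fst (h ! t), fst (snd (h ! t)))
                 \<and> snd (snd (h ! t)) < nOut (fst (h ! t)))"

lemma complete_hist_iff:
  "complete_hist nOut nxt chi h \<longleftrightarrow> partial_hist nOut nxt chi h \<and> nxt chi h = None"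
  unfolding complete_hist_def partial_hist_def by blast

lemma partial_hist_Nil [simp]: "partial_hist nOut nxt chi []"
  unfolding partial_hist_def by simp

lemma partial_hist_snoc:
  assumes "partial_hist nOut nxt chi h" "nxt chi h = Some (i, x)" "a < nOut i"
  shows "partial_hist nOut nxt chi (h @ [(i, (x, a))])"
  using assms unfolding partial_hist_def by (auto simp: nth_append less_Suc_eq)

definition box_letters :: "nat \<Rightarrow> hist \<Rightarrow> (nat \<times> nat) list" where
  "box_letters i h = map snd (filter (\<lambda>p. fst p = i) h)"

lemma box_letters_map_of:
  "distinct (map fst h) \<Longrightarrow> box_letters i h = (case map_of h i of None \<Rightarrow> [] | Some e \<Rightarrow> [e])"
proof (induction h)
  case Nil
  then show ?case by (simp add: box_letters_def)
next
  case (Cons p h)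
  show ?case
  proof (cases "fst p = i")
    case True
    then have "map_of h i = None"
      using Cons.prems by (auto simp: map_of_eq_None_iff)
    then show ?thesis
      using Cons True by (cases p) (simp add: box_letters_def)
  next
    case False
    then show ?thesis
      using Cons by (cases p) (simp add: box_letters_def)
  qed
qed

definition in_alphabet :: "nat \<Rightarrow> nat \<Rightarrow> (nat \<times> nat) option \<Rightarrow> bool" where
  "in_alphabet nI nO e = (case e of None \<Rightarrow> True | Some (x, a) \<Rightarrow> x < nI \<and> a < nO)"

definition opt_list :: "(nat \<times> nat) option \<Rightarrow> (nat \<times> nat) list" where
  "opt_list e = (case e of None \<Rightarrow> [] | Some p \<Rightarrow> [p])"

definition box_word :: "nat \<Rightarrow> hist list \<Rightarrow> (nat \<times> nat) list" where
  "box_word i \<tau> = concat (map (box_letters i) \<tau>)"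

lemma box_word_simps [simp]:
  "box_word i [] = []"
  "box_word i (h # \<tau>) = box_letters i h @ box_word i \<tau>"
  "box_word i (\<tau> @ \<tau>') = box_word i \<tau> @ box_word i \<tau>'"
  by (simp_all add: box_word_def)

lemma box_word_rev:
  "(\<And>h. h \<in> set \<tau> \<Longrightarrow> length (box_letters i h) \<le> 1) \<Longrightarrow> box_word i (rev \<tau>) = rev (box_word i \<tau>)"
proof (induction \<tau>)
  case Nil
  then show ?case by simp
next
  case (Cons h \<tau>)
  then have "length (box_letters i h) \<le> 1"
    by simp
  then have "rev (box_letters i h) = box_letters i h"
    by (cases "box_letters i h") auto
  then show ?case
    using Cons by simp
qed

lemma length_box_word:
  "(\<And>h. h \<in> set \<tau> \<Longrightarrow> length (box_letters i h) \<le> 1) \<Longrightarrow> length (box_word i \<tau>) \<le> length \<tau>"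
  by (induction \<tau>) force+

locale wiring =
  fixes k :: nat and nIn :: "nat \<Rightarrow> nat" and nIn' nOut' :: nat and nOut :: "nat \<Rightarrow> nat"
    and nxt :: "nat \<Rightarrow> hist \<Rightarrow> (nat \<times> nat) option" and out :: "nat \<Rightarrow> hist \<Rightarrow> nat"
  assumes wf: "wiring_wf k nIn nIn' nOut' nxt out"
begin

lemma nxt_wf: "chi < nIn' \<Longrightarrow> nxt chi h = Some (i, x) \<Longrightarrow> i < k \<and> i \<notin> fst ` set h \<and> x < nIn i"
  using wf unfolding wiring_wf_def by blast

lemma out_wf: "chi < nIn' \<Longrightarrow> out chi h < nOut'"
  using wf unfolding wiring_wf_def by blast

lemma partial_hist_wf:
  assumes chi: "chi < nIn'" and h: "partial_hist nOut nxt chi h"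
  shows "distinct (map fst h)"
    and "\<forall>p\<in>set h. fst p < k \<and> fst (snd p) < nIn (fst p) \<and> snd (snd p) < nOut (fst p)"
proof -
  have step: "fst (h ! t) < k \<and> fst (h ! t) \<notin> fst ` set (take t h)
      \<and> fst (snd (h ! t)) < nIn (fst (h ! t)) \<and> snd (snd (h ! t)) < nOut (fst (h ! t))"
    if "t < length h" for t
    using nxt_wf[OF chi, of "take t h" "fst (h ! t)" "fst (snd (h ! t))"] h that
    unfolding partial_hist_def by auto
  have "fst (h ! s) \<noteq> fst (h ! t)" if "s < t" "t < length h" for s t
  proof -
    have "h ! s \<in> set (take t h)"
      using that by (auto simp: in_set_conv_nth)
    then show ?thesis
      using step[OF that(2)] by (metis image_eqI)
  qed
  then show "distinct (map fst h)"
    unfolding distinct_conv_nth by (metis length_map linorder_neq_iff nth_map)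
  show "\<forall>p\<in>set h. fst p < k \<and> fst (snd p) < nIn (fst p) \<and> snd (snd p) < nOut (fst p)"
  proof
    fix p assume "p \<in> set h"
    then obtain t where "t < length h" "p = h ! t"
      by (auto simp: in_set_conv_nth)
    then show "fst p < k \<and> fst (snd p) < nIn (fst p) \<and> snd (snd p) < nOut (fst p)"
      using step by simp
  qed
qed

lemma length_partial_hist_le:
  assumes chi: "chi < nIn'" and h: "partial_hist nOut nxt chi h"
  shows "length h \<le> k"
proof -
  have "length h = card (set (map fst h))"
    using distinct_card[OF partial_hist_wf(1)[OF chi h]] by simp
  also have "\<dots> \<le> card {..<k}"
    using partial_hist_wf(2)[OF chi h] by (intro card_mono) auto
  finally show ?thesis by simp
qed

lemma finite_partial_hists:
  assumes chi: "chi < nIn'"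
  shows "finite {h. partial_hist nOut nxt chi h}"
proof -
  let ?letters = "Sigma {..<k} (\<lambda>i. {..<nIn i} \<times> {..<nOut i})"
  have "{h. partial_hist nOut nxt chi h} \<subseteq> {h. set h \<subseteq> ?letters \<and> length h \<le> k}"
    using partial_hist_wf(2)[OF chi] length_partial_hist_le[OF chi] by fastforce
  moreover have "finite {h. set h \<subseteq> ?letters \<and> length h \<le> k}"
    by (rule finite_lists_length_le) auto
  ultimately show ?thesis
    by (rule finite_subset)
qed

lemma finite_complete_hists: "chi < nIn' \<Longrightarrow> finite {h. complete_hist nOut nxt chi h}"
  by (rule finite_subset[OF _ finite_partial_hists]) (auto simp: complete_hist_iff)

definition completions :: "nat \<Rightarrow> hist \<Rightarrow> hist set" where
  "completions chi h = {h'. complete_hist nOut nxt chi h' \<and> take (length h) h' = h}"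

lemma completions_stop:
  assumes "partial_hist nOut nxt chi h" and "nxt chi h = None"
  shows "completions chi h = {h}"
proof -
  have "h' = h" if "complete_hist nOut nxt chi h'" "take (length h) h' = h" for h'
  proof (rule ccontr)
    assume "h' \<noteq> h"
    have "length h < length h'"
    proof (rule ccontr)
      assume "\<not> length h < length h'"
      then show False
        using that(2) \<open>h' \<noteq> h\<close> by simp
    qed
    then have "nxt chi (take (length h) h') \<noteq> None"
      using that(1) unfolding complete_hist_iff partial_hist_def by auto
    then show False
      using that(2) assms(2) by simp
  qed
  then show ?thesis
    using assms unfolding completions_def by (auto simp: complete_hist_iff)
qed

lemma completions_probe:
  assumes h: "partial_hist nOut nxt chi h" and probe: "nxt chi h = Some (i, x)"
  shows "completions chi h = (\<Union>a<nOut i. completions chi (h @ [(i, (x, a))]))"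
proof (intro equalityI subsetI)
  fix h' assume "h' \<in> completions chi h"
  then have c: "complete_hist nOut nxt chi h'" and t: "take (length h) h' = h"
    unfolding completions_def by auto
  have "length h < length h'"
  proof (rule ccontr)
    assume "\<not> length h < length h'"
    then have "h' = h" using t by simp
    then show False using c probe by (simp add: complete_hist_iff)
  qed
  then have next_letter: "nxt chi h = Some (fst (h' ! length h), fst (snd (h' ! length h)))"
      and "snd (snd (h' ! length h)) < nOut (fst (h' ! length h))"
      and "take (Suc (length h)) h' = h @ [h' ! length h]"
    using c t unfolding complete_hist_iff partial_hist_def by (auto simp: take_Suc_conv_app_nth)
  moreover obtain i' x' a where "h' ! length h = (i', (x', a))"
    by (cases "h' ! length h") auto
  ultimately have "a < nOut i" "take (Suc (length h)) h' = h @ [(i, (x, a))]"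
    using probe by auto
  then show "h' \<in> (\<Union>a<nOut i. completions chi (h @ [(i, (x, a))]))"
    using c unfolding completions_def by auto
next
  fix h' assume "h' \<in> (\<Union>a<nOut i. completions chi (h @ [(i, (x, a))]))"
  then obtain a where "complete_hist nOut nxt chi h'" "take (Suc (length h)) h' = h @ [(i, (x, a))]"
    unfolding completions_def by auto
  moreover have "take (length h) h' = take (length h) (take (Suc (length h)) h')"
    by simp
  ultimately show "h' \<in> completions chi h"
    unfolding completions_def by simp
qed

lemma map_of_snoc:
  "i \<notin> fst ` set h \<Longrightarrow> map_of (h @ [(i, v)]) j = (if j = i then Some v else map_of h j)"
  by (induction h) auto

text \<open>Summing a product of per-box factors over all completions: whenever a box is probed, its
  factor is summed over the outcome, so a family of factors that is normalised in this sense
  makes the sum collapse back to the current partial history.\<close>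

lemma sum_completions:
  assumes chi: "chi < nIn'"
    and norm: "\<And>i x. i < k \<Longrightarrow> x < nIn i \<Longrightarrow> (\<Sum>a<nOut i. f i (Some (x, a))) = (f i None :: real)"
    and h: "partial_hist nOut nxt chi h"
  shows "(\<Sum>h'\<in>completions chi h. \<Prod>j<k. f j (map_of h' j)) = (\<Prod>j<k. f j (map_of h j))"
  using h
proof (induction "k - length h" arbitrary: h rule: less_induct)
  case less
  show ?case
  proof (cases "nxt chi h")
    case None
    then show ?thesis
      using completions_stop[OF less.prems] by simp
  next
    case (Some ix)
    then obtain i x where probe: "nxt chi h = Some (i, x)"
      by (cases ix) auto
    then have i: "i < k" "i \<notin> fst ` set h" "x < nIn i"
      using nxt_wf[OF chi] by auto
    let ?h = "\<lambda>a. h @ [(i, (x, a))]"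
    have ext: "partial_hist nOut nxt chi (?h a)" if "a < nOut i" for a
      using partial_hist_snoc[OF less.prems probe that] .
    have IH: "(\<Sum>h'\<in>completions chi (?h a). \<Prod>j<k. f j (map_of h' j)) = (\<Prod>j<k. f j (map_of (?h a) j))"
      if "a < nOut i" for a
      using less.hyps[OF _ ext[OF that]] length_partial_hist_le[OF chi ext[OF that]] by simp
    have disjoint: "completions chi (?h a) \<inter> completions chi (?h b) = {}" if "a \<noteq> b" for a b
    proof -
      have letter: "h' ! length h = (i, (x, a))" if "h' \<in> completions chi (?h a)" for h' a
      proof -
        have "take (Suc (length h)) h' ! length h = (i, (x, a))"
          using that unfolding completions_def by simp
        then show ?thesis
          by simp
      qed
      show ?thesis
        using letter[of _ a] letter[of _ b] \<open>a \<noteq> b\<close> by force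
    qed
    have finite: "finite (completions chi h')" for h'
      unfolding completions_def by (rule finite_subset[OF _ finite_complete_hists[OF chi]]) auto
    have split: "(\<Prod>j<k. f j (map_of (?h a) j))
        = f i (Some (x, a)) * (\<Prod>j\<in>{..<k} - {i}. f j (map_of h j))"
      for a
    proof -
      have "(\<Prod>j\<in>{..<k} - {i}. f j (map_of (?h a) j)) = (\<Prod>j\<in>{..<k} - {i}. f j (map_of h j))"
        by (intro prod.cong refl) (simp add: map_of_snoc[OF i(2)] del: map_of_append)
      then show ?thesis
        using i(1) by (simp add: prod.remove[of _ i] map_of_snoc[OF i(2)] del: map_of_append)
    qed
    have "(\<Sum>h'\<in>completions chi h. \<Prod>j<k. f j (map_of h' j))
        = (\<Sum>a<nOut i. \<Sum>h'\<in>completions chi (?h a). \<Prod>j<k. f j (map_of h' j))"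
      unfolding completions_probe[OF less.prems probe]
      by (rule sum.UNION_disjoint) (auto simp: finite disjoint)
    also have "\<dots> = (\<Sum>a<nOut i. \<Prod>j<k. f j (map_of (?h a) j))"
      by (intro sum.cong refl IH) simp
    also have "\<dots> = (\<Sum>a<nOut i. f i (Some (x, a))) * (\<Prod>j\<in>{..<k} - {i}. f j (map_of h j))"
      by (simp only: split sum_distrib_right)
    also have "\<dots> = f i (map_of h i) * (\<Prod>j\<in>{..<k} - {i}. f j (map_of h j))"
      using norm[OF i(1,3)] i(2) map_of_eq_None_iff[of h i] by simp
    also have "\<dots> = (\<Prod>j<k. f j (map_of h j))"
      using i(1) by (simp add: prod.remove[of _ i])
    finally show ?thesis .
  qed
qed

lemma sum_complete_hists:
  assumes "chi < nIn'"
    and "\<And>i x. i < k \<Longrightarrow> x < nIn i \<Longrightarrow> (\<Sum>a<nOut i. f i (Some (x, a))) = (f i None :: real)"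
  shows "(\<Sum>h | complete_hist nOut nxt chi h. \<Prod>i<k. f i (map_of h i)) = (\<Prod>i<k. f i None)"
  using sum_completions[OF assms partial_hist_Nil] by (simp add: completions_def)

lemma complete_hists_diverge:
  assumes chi: "chi < nIn'"
    and c: "complete_hist nOut nxt chi h" and c': "complete_hist nOut nxt chi h'" and ne: "h \<noteq> h'"
  obtains t where "t < length h" "t < length h'" "fst (h ! t) = fst (h' ! t)"
    "fst (snd (h ! t)) = fst (snd (h' ! t))" "snd (snd (h ! t)) \<noteq> snd (snd (h' ! t))"
proof -
  have no_prefix: False if "take (length g) g' = g" "length g < length g'"
      "complete_hist nOut nxt chi g" "complete_hist nOut nxt chi g'" for g g'
  proof -
    have "nxt chi (take (length g) g') \<noteq> None"
      using that(2,4) unfolding complete_hist_iff partial_hist_def by auto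
    then show False
      using that(1,3) unfolding complete_hist_iff by simp
  qed
  have "\<exists>t. t < length h \<and> t < length h' \<and> h ! t \<noteq> h' ! t"
  proof (rule ccontr)
    assume "\<not> ?thesis"
    then have same: "h ! t = h' ! t" if "t < length h" "t < length h'" for t
      using that by blast
    consider "length h < length h'" | "length h' < length h" | "length h = length h'"
      by linarith
    then show False
    proof cases
      case 1
      then have "take (length h) h' = h"
        using same by (intro nth_equalityI) auto
      then show False
        using no_prefix 1 c c' by blast
    next
      case 2
      then have "take (length h') h = h'"
        using same by (intro nth_equalityI) auto
      then show False
        using no_prefix 2 c c' by blast
    next
      case 3
      then show False
        using ne same by (auto intro: nth_equalityI)
    qed
  qed
  define t0 where "t0 = (LEAST t. t < length h \<and> t < length h' \<and> h ! t \<noteq> h' ! t)"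
  have t0: "t0 < length h" "t0 < length h'" "h ! t0 \<noteq> h' ! t0"
    using LeastI_ex[OF \<open>\<exists>t. _\<close>] unfolding t0_def by auto
  have first: "h ! t = h' ! t" if "t < t0" for t
    using not_less_Least[OF that[unfolded t0_def]] t0 that by auto
  have "take t0 h = take t0 h'"
    using t0 first by (intro nth_equalityI) auto
  moreover have "nxt chi (take t0 h) = Some (fst (h ! t0), fst (snd (h ! t0)))"
    and "nxt chi (take t0 h') = Some (fst (h' ! t0), fst (snd (h' ! t0)))"
    using c c' t0 unfolding complete_hist_iff partial_hist_def by auto
  ultimately show ?thesis
    using t0 that by (auto simp: prod_eq_iff)
qed

lemma complete_hists_clash:
  assumes chi: "chi < nIn'"
    and c: "complete_hist nOut nxt chi h" and c': "complete_hist nOut nxt chi h'" and ne: "h \<noteq> h'"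
  obtains i p q
  where "i < k" "box_letters i h = [p]" "box_letters i h' = [q]" "fst p = fst q" "p \<noteq> q"
proof -
  obtain t where t: "t < length h" "t < length h'" "fst (h ! t) = fst (h' ! t)"
      "fst (snd (h ! t)) = fst (snd (h' ! t))" "snd (snd (h ! t)) \<noteq> snd (snd (h' ! t))"
    using complete_hists_diverge[OF assms] .
  have h: "partial_hist nOut nxt chi h" and h': "partial_hist nOut nxt chi h'"
    using c c' by (auto simp: complete_hist_iff)
  note d = partial_hist_wf(1)[OF chi h] partial_hist_wf(1)[OF chi h']
  have "map_of h (fst (h ! t)) = Some (snd (h ! t))"
    using nth_mem[OF t(1)] by (simp add: map_of_eq_Some_iff[OF d(1)])
  moreover have "map_of h' (fst (h ! t)) = Some (snd (h' ! t))"
    using nth_mem[OF t(2)] t(3) by (simp add: map_of_eq_Some_iff[OF d(2)])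
  moreover have "fst (h ! t) < k"
    using partial_hist_wf(2)[OF chi h] t(1) by (auto dest: nth_mem)
  ultimately show ?thesis
    using that t box_letters_map_of[OF d(1)] box_letters_map_of[OF d(2)] by (auto simp: prod_eq_iff)
qed

lemma length_box_letters: "chi < nIn' \<Longrightarrow> partial_hist nOut nxt chi h \<Longrightarrow> length (box_letters i h) \<le> 1"
  using partial_hist_wf box_letters_map_of by (auto split: option.splits)

lemma set_box_letters:
  "chi < nIn' \<Longrightarrow> partial_hist nOut nxt chi h \<Longrightarrow> i < k
    \<Longrightarrow> set (box_letters i h) \<subseteq> {0..<nIn i} \<times> {0..<nOut i}"
  using partial_hist_wf(2)[of chi h] unfolding box_letters_def by auto

lemma complete_hist_in_alphabet:
  "chi < nIn' \<Longrightarrow> complete_hist nOut nxt chi h \<Longrightarrow> i < k \<Longrightarrow> in_alphabet (nIn i) (nOut i) (map_of h i)"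
  using partial_hist_wf(2)[of chi h] unfolding in_alphabet_def complete_hist_iff
  by (auto split: option.splits dest!: map_of_SomeD)

lemma box_letters_complete_hist:
  "chi < nIn' \<Longrightarrow> complete_hist nOut nxt chi h \<Longrightarrow> box_letters i h = opt_list (map_of h i)"
  using partial_hist_wf(1)[of chi h] box_letters_map_of[of h i]
  unfolding complete_hist_iff opt_list_def by auto

text \<open>A transcript of a word (chi_1, alpha_1) ... (chi_n, alpha_n) of effective letters lists one
  complete run of the wiring per letter, on input chi_t and with effective output alpha_t.\<close>

definition outcome_hists :: "nat \<times> nat \<Rightarrow> hist set" where
  "outcome_hists x = {h. complete_hist nOut nxt (fst x) h \<and> out (fst x) h = snd x}"

definition transcripts :: "(nat \<times> nat) list \<Rightarrow> hist list set" where
  "transcripts xs = {\<tau>. list_all2 (\<lambda>x h. h \<in> outcome_hists x) xs \<tau>}"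

lemma finite_outcome_hists: "fst x < nIn' \<Longrightarrow> finite (outcome_hists x)"
  unfolding outcome_hists_def by (rule finite_subset[OF _ finite_complete_hists]) auto

lemma sum_outcome_hists:
  assumes chi: "chi < nIn'"
  shows "(\<Sum>\<alpha><nOut'. \<Sum>h\<in>outcome_hists (chi, \<alpha>). f h)
    = (\<Sum>h | complete_hist nOut nxt chi h. (f h :: real))"
proof -
  let ?C = "{h. complete_hist nOut nxt chi h}"
  have "(\<Sum>h\<in>?C. f h) = (\<Sum>h\<in>?C. \<Sum>\<alpha><nOut'. if out chi h = \<alpha> then f h else 0)"
    using out_wf[OF chi] by (intro sum.cong refl) (simp add: sum.delta)
  also have "\<dots> = (\<Sum>\<alpha><nOut'. \<Sum>h\<in>{h \<in> ?C. out chi h = \<alpha>}. f h)"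
    by (subst sum.swap) (simp only: sum.inter_filter[OF finite_complete_hists[OF chi]])
  also have "\<dots> = (\<Sum>\<alpha><nOut'. \<Sum>h\<in>outcome_hists (chi, \<alpha>). f h)"
    unfolding outcome_hists_def by simp
  finally show ?thesis ..
qed

lemma transcripts_Nil: "transcripts [] = {[]}"
  by (auto simp: transcripts_def)

lemma transcripts_Cons:
  "transcripts (x # xs) = (\<lambda>(h, \<tau>). h # \<tau>) ` (outcome_hists x \<times> transcripts xs)"
  by (auto simp: transcripts_def list_all2_Cons1)

lemma transcripts_append: "transcripts (u @ v) = (\<lambda>(\<sigma>, \<tau>). \<sigma> @ \<tau>) ` (transcripts u \<times> transcripts v)"
proof
  show "transcripts (u @ v) \<subseteq> (\<lambda>(\<sigma>, \<tau>). \<sigma> @ \<tau>) ` (transcripts u \<times> transcripts v)"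
    by (auto simp: transcripts_def list_all2_append1 image_iff)
  show "(\<lambda>(\<sigma>, \<tau>). \<sigma> @ \<tau>) ` (transcripts u \<times> transcripts v) \<subseteq> transcripts (u @ v)"
    by (auto simp: transcripts_def intro!: list_all2_appendI)
qed

lemma transcripts_rev: "transcripts (rev xs) = rev ` transcripts xs"
proof
  show "transcripts (rev xs) \<subseteq> rev ` transcripts xs"
  proof
    fix \<tau> assume "\<tau> \<in> transcripts (rev xs)"
    then have "rev \<tau> \<in> transcripts xs"
      by (simp add: transcripts_def list_all2_rev1)
    then show "\<tau> \<in> rev ` transcripts xs"
      by (metis image_eqI rev_rev_ident)
  qed
  show "rev ` transcripts xs \<subseteq> transcripts (rev xs)"
    by (auto simp: transcripts_def)
qed

lemma length_transcript: "\<tau> \<in> transcripts xs \<Longrightarrow> length \<tau> = length xs"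
  by (auto simp: transcripts_def dest: list_all2_lengthD)

lemma finite_transcripts: "\<forall>p\<in>set xs. fst p < nIn' \<Longrightarrow> finite (transcripts xs)"
  by (induction xs) (auto simp: transcripts_Nil transcripts_Cons finite_outcome_hists)

lemma transcript_complete:
  assumes "\<tau> \<in> transcripts xs" "h \<in> set \<tau>"
  obtains x where "x \<in> set xs" "complete_hist nOut nxt (fst x) h"
proof -
  obtain t where t: "t < length \<tau>" "h = \<tau> ! t"
    using assms(2) by (auto simp: in_set_conv_nth)
  then have "xs ! t \<in> set xs" "h \<in> outcome_hists (xs ! t)"
    using assms(1) by (auto simp: transcripts_def list_all2_conv_all_nth)
  then show ?thesis
    using that unfolding outcome_hists_def by blast
qed

lemma transcript_length_box_letters:
  assumes "\<forall>p\<in>set xs. fst p < nIn'" "\<tau> \<in> transcripts xs" "h \<in> set \<tau>"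
  shows "length (box_letters i h) \<le> 1"
proof -
  obtain x where "x \<in> set xs" "complete_hist nOut nxt (fst x) h"
    using transcript_complete[OF assms(2,3)] .
  then show ?thesis
    using assms(1) length_box_letters by (auto simp: complete_hist_iff)
qed

lemma transcript_set_box_letters:
  assumes "\<forall>p\<in>set xs. fst p < nIn'" "\<tau> \<in> transcripts xs" "h \<in> set \<tau>" "i < k"
  shows "set (box_letters i h) \<subseteq> {0..<nIn i} \<times> {0..<nOut i}"
proof -
  obtain x where "x \<in> set xs" "complete_hist nOut nxt (fst x) h"
    using transcript_complete[OF assms(2,3)] .
  then show ?thesis
    using assms(1,4) set_box_letters[of "fst x" h i] by (auto simp: complete_hist_iff)
qed

lemma sum_transcripts_append:
  "(\<Sum>\<tau>\<in>transcripts (u @ v). G \<tau>) = (\<Sum>\<sigma>\<in>transcripts u. \<Sum>\<tau>\<in>transcripts v. (G (\<sigma> @ \<tau>) :: real))"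
proof -
  have "inj_on (\<lambda>(\<sigma>, \<tau>). \<sigma> @ \<tau>) (transcripts u \<times> transcripts v)"
    by (auto simp: inj_on_def length_transcript)
  then have "(\<Sum>\<tau>\<in>transcripts (u @ v). G \<tau>) = (\<Sum>(\<sigma>, \<tau>)\<in>transcripts u \<times> transcripts v. G (\<sigma> @ \<tau>))"
    unfolding transcripts_append by (subst sum.reindex) (simp_all add: case_prod_beta)
  then show ?thesis
    by (simp add: sum.cartesian_product)
qed

lemma sum_transcripts_Cons:
  "(\<Sum>\<tau>\<in>transcripts (x # v). G \<tau>) = (\<Sum>h\<in>outcome_hists x. \<Sum>\<tau>\<in>transcripts v. (G (h # \<tau>) :: real))"
proof -
  have "inj_on (\<lambda>(h, \<tau>). h # \<tau>) (outcome_hists x \<times> transcripts v)"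
    by (auto simp: inj_on_def)
  then have "(\<Sum>\<tau>\<in>transcripts (x # v). G \<tau>) = (\<Sum>(h, \<tau>)\<in>outcome_hists x \<times> transcripts v. G (h # \<tau>))"
    unfolding transcripts_Cons by (subst sum.reindex) (simp_all add: case_prod_beta)
  then show ?thesis
    by (simp add: sum.cartesian_product)
qed

text \<open>The property of evaluation through the normal form that survives summation over transcripts.\<close>

definition respects_red :: "((nat \<Rightarrow> (nat \<times> nat) list) \<Rightarrow> real) \<Rightarrow> bool" where
  "respects_red F \<longleftrightarrow> (\<forall>ws. (\<exists>i<k. \<not> clash_free (ws i)) \<longrightarrow> F ws = 0) \<and>
     (\<forall>ws ws'. (\<forall>i<k. red (ws i) = red (ws' i)) \<longrightarrow> F ws = F ws')"

lemma respects_red_eq_0: "respects_red F \<Longrightarrow> i < k \<Longrightarrow> \<not> clash_free (ws i) \<Longrightarrow> F ws = 0"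
  unfolding respects_red_def by blast

lemma respects_red_cong:
  "respects_red F \<Longrightarrow> (\<And>i. i < k \<Longrightarrow> red (ws i) = red (ws' i)) \<Longrightarrow> F ws = F ws'"
  unfolding respects_red_def by blast

lemma respects_red_clashing_hists:
  assumes F: "respects_red F" and chi: "chi < nIn'"
    and "complete_hist nOut nxt chi h" "complete_hist nOut nxt chi h'" "h \<noteq> h'"
  shows "F (\<lambda>i. box_word i \<sigma> @ box_letters i h @ box_letters i h' @ box_word i \<tau>) = 0"
proof -
  obtain i p q
    where "i < k" "box_letters i h = [p]" "box_letters i h' = [q]" "fst p = fst q" "p \<noteq> q"
    using complete_hists_clash[OF chi assms(3-5)] .
  then show ?thesis
    using not_clash_free_clash[of p q "box_word i \<sigma>" "box_word i \<tau>"]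
    by (auto intro: respects_red_eq_0[OF F])
qed

text \<open>Repeating an effective letter does not change the sum: the two runs must coincide, since
  otherwise some box receives two different outcomes of the same input.\<close>

lemma sum_transcripts_dup:
  assumes F: "respects_red F" and chi: "fst x < nIn'" and v: "\<forall>p\<in>set v. fst p < nIn'"
  shows "(\<Sum>\<tau>\<in>transcripts (u @ x # x # v). F (\<lambda>i. box_word i \<tau>))
    = (\<Sum>\<tau>\<in>transcripts (u @ x # v). F (\<lambda>i. box_word i \<tau>))"
proof -
  have "(\<Sum>h'\<in>outcome_hists x. \<Sum>\<tau>\<in>transcripts v. F (\<lambda>i. box_word i (\<sigma> @ h # h' # \<tau>)))
      = (\<Sum>\<tau>\<in>transcripts v. F (\<lambda>i. box_word i (\<sigma> @ h # \<tau>)))" if h: "h \<in> outcome_hists x" for \<sigma> h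
  proof -
    have complete: "complete_hist nOut nxt (fst x) h'" if "h' \<in> outcome_hists x" for h'
      using that unfolding outcome_hists_def by blast
    have "(\<Sum>h'\<in>outcome_hists x - {h}. \<Sum>\<tau>\<in>transcripts v. F (\<lambda>i. box_word i (\<sigma> @ h # h' # \<tau>))) = 0"
      using respects_red_clashing_hists[OF F chi complete[OF h] complete]
      by (intro sum.neutral ballI) auto
    moreover have "F (\<lambda>i. box_word i (\<sigma> @ h # h # \<tau>)) = F (\<lambda>i. box_word i (\<sigma> @ h # \<tau>))" for \<tau>
      using length_box_letters[OF chi] complete[OF h]
      by (intro respects_red_cong[OF F]) (simp add: red_dup complete_hist_iff)
    ultimately show ?thesis
      using h finite_outcome_hists[OF chi] by (simp add: sum.remove)
  qed
  then show ?thesis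
    by (simp add: sum_transcripts_append sum_transcripts_Cons)
qed

text \<open>Two adjacent effective letters with the same input and different outputs force two different
  runs on the same input, which clash in some box.\<close>

lemma sum_transcripts_clash:
  assumes F: "respects_red F" and xs: "\<forall>p\<in>set xs. fst p < nIn'" and clash: "\<not> clash_free xs"
  shows "(\<Sum>\<tau>\<in>transcripts xs. F (\<lambda>i. box_word i \<tau>)) = 0"
proof -
  obtain n where n: "Suc n < length xs" "fst (xs ! n) = fst (xs ! Suc n)" "xs ! n \<noteq> xs ! Suc n"
    using clash unfolding not_clash_free_iff_nth by blast
  define x y where "x = xs ! n" and "y = xs ! Suc n"
  have xs_eq: "xs = take n xs @ x # y # drop (Suc (Suc n)) xs"
    unfolding x_def y_def using n(1) by (simp add: Cons_nth_drop_Suc)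
  have chi: "fst x < nIn'"
    using xs n(1) unfolding x_def y_def by simp
  have "F (\<lambda>i. box_word i (\<sigma> @ h # h' # \<tau>)) = 0"
    if "h \<in> outcome_hists x" "h' \<in> outcome_hists y" for \<sigma> h h' \<tau>
  proof -
    have "h \<noteq> h'"
      using that n(2,3) unfolding x_def y_def outcome_hists_def by (auto simp: prod_eq_iff)
    then show ?thesis
      using respects_red_clashing_hists[OF F chi, of h h' \<sigma> \<tau>] that n(2)
      unfolding x_def y_def outcome_hists_def by simp
  qed
  then show ?thesis
    by (subst xs_eq) (simp add: sum_transcripts_append sum_transcripts_Cons)
qed

lemma sum_transcripts_remdups_adj:
  assumes F: "respects_red F"
  shows "\<forall>p\<in>set xs. fst p < nIn' \<Longrightarrow>
    (\<Sum>\<tau>\<in>transcripts xs. F (\<lambda>i. box_word i \<tau>))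
      = (\<Sum>\<tau>\<in>transcripts (remdups_adj xs). F (\<lambda>i. box_word i \<tau>))"
proof (induction "length xs" arbitrary: xs rule: less_induct)
  case less
  show ?case
  proof (cases "\<exists>n. Suc n < length xs \<and> xs ! n = xs ! Suc n")
    case True
    then obtain n where n: "Suc n < length xs" "xs ! n = xs ! Suc n"
      by blast
    define u v x where "u = take n xs" and "v = drop (Suc (Suc n)) xs" and "x = xs ! n"
    have xs: "xs = u @ x # x # v"
      unfolding u_def v_def x_def using n by (metis Cons_nth_drop_Suc Suc_lessD append_take_drop_id)
    then have "\<forall>p\<in>set (u @ x # v). fst p < nIn'"
      using less.prems by auto
    then show ?thesis
      using less.hyps[of "u @ x # v"] sum_transcripts_dup[OF F] xs
      by (simp add: remdups_adj_dup)
  next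
    case False
    then show ?thesis
      by (simp add: remdups_adj_id)
  qed
qed

end

lemma is_boxD:
  assumes "is_box nX nA nY nB P"
  shows is_box_nonneg: "a < nA \<Longrightarrow> b < nB \<Longrightarrow> x < nX \<Longrightarrow> y < nY \<Longrightarrow> 0 \<le> P a b x y"
    and is_box_normalized: "x < nX \<Longrightarrow> y < nY \<Longrightarrow> (\<Sum>a<nA. \<Sum>b<nB. P a b x y) = 1"
    and is_box_no_signalling_left:
      "a < nA \<Longrightarrow> x < nX \<Longrightarrow> y < nY \<Longrightarrow> y' < nY \<Longrightarrow> (\<Sum>b<nB. P a b x y) = (\<Sum>b<nB. P a b x y')"
    and is_box_no_signalling_right:
      "b < nB \<Longrightarrow> y < nY \<Longrightarrow> x < nX \<Longrightarrow> x' < nX \<Longrightarrow> (\<Sum>a<nA. P a b x y) = (\<Sum>a<nA. P a b x' y)"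
    and is_box_inputs_nonempty: "0 < nX" "0 < nY"
proof -
  note box = assms[unfolded is_box_def]
  have nonneg: "\<forall>a<nA. \<forall>b<nB. \<forall>x<nX. \<forall>y<nY. 0 \<le> P a b x y"
    using box by (elim conjE) assumption
  have normalized: "\<forall>x<nX. \<forall>y<nY. (\<Sum>a<nA. \<Sum>b<nB. P a b x y) = 1"
    using box by (elim conjE) assumption
  have left: "\<forall>a<nA. \<forall>x<nX. \<forall>y<nY. \<forall>y'<nY. (\<Sum>b<nB. P a b x y) = (\<Sum>b<nB. P a b x y')"
    using box by (elim conjE) assumption
  have right: "\<forall>b<nB. \<forall>y<nY. \<forall>x<nX. \<forall>x'<nX. (\<Sum>a<nA. P a b x y) = (\<Sum>a<nA. P a b x' y)"
    using box by (elim conjE) assumption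
  show "a < nA \<Longrightarrow> b < nB \<Longrightarrow> x < nX \<Longrightarrow> y < nY \<Longrightarrow> 0 \<le> P a b x y"
    using nonneg by blast
  show "x < nX \<Longrightarrow> y < nY \<Longrightarrow> (\<Sum>a<nA. \<Sum>b<nB. P a b x y) = 1"
    using normalized by blast
  show "a < nA \<Longrightarrow> x < nX \<Longrightarrow> y < nY \<Longrightarrow> y' < nY \<Longrightarrow> (\<Sum>b<nB. P a b x y) = (\<Sum>b<nB. P a b x y')"
    using left by blast
  show "b < nB \<Longrightarrow> y < nY \<Longrightarrow> x < nX \<Longrightarrow> x' < nX \<Longrightarrow> (\<Sum>a<nA. P a b x y) = (\<Sum>a<nA. P a b x' y)"
    using right by blast
  show "0 < nX" "0 < nY"
    using box by simp_all
qed

definition box_functional :: "(nat \<times> nat) set \<Rightarrow> nat \<Rightarrow> nat \<Rightarrow> nat \<Rightarrow> nat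
    \<Rightarrow> (nat \<Rightarrow> nat \<Rightarrow> nat \<Rightarrow> nat \<Rightarrow> real) \<Rightarrow> (word \<Rightarrow> real) \<Rightarrow> bool" where
  "box_functional S nX nA nY nB P L \<longleftrightarrow> L ([], []) = 1 \<and> positive_on (Oset S nX nA nY nB) L \<and>
     (\<forall>a<nA. \<forall>b<nB. \<forall>x<nX. \<forall>y<nY. P a b x y = evL L ([(x, a)], [(y, b)]))"

lemma O_positive_iff:
  "O_positive S nX nA nY nB P \<longleftrightarrow>
     is_box nX nA nY nB P \<and> (\<exists>L. box_functional S nX nA nY nB P L)"
  unfolding O_positive_def box_functional_def positive_on_def ..

lemma marg_word_image_subset_Oset:
  assumes "\<exists>(m, n)\<in>S. 1 \<le> m" "\<exists>(m, n)\<in>S. 1 \<le> n" "x < nX" "y < nY"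
  shows "marg_word x y ` marg_index nA nB \<subseteq> Oset S nX nA nY nB"
proof -
  obtain m1 n1 where m1: "(m1, n1) \<in> S" "1 \<le> m1"
    using assms(1) by blast
  obtain m2 n2 where m2: "(m2, n2) \<in> S" "1 \<le> n2"
    using assms(2) by blast
  have "([], []) \<in> AmBn m1 n1 nX nA nY nB"
    by (simp add: AmBn_def)
  moreover have "([(x, a)], []) \<in> AmBn m1 n1 nX nA nY nB" if "a < nA" for a
    using m1 assms(3) that by (simp add: AmBn_def)
  moreover have "([], [(y, b)]) \<in> AmBn m2 n2 nX nA nY nB" if "b < nB" for b
    using m2 assms(4) that by (simp add: AmBn_def)
  ultimately show ?thesis
    using m1 m2 unfolding Oset_def marg_index_def marg_word_def by fastforce
qed

text \<open>The input 0 in the marginals below is arbitrary, by no-signalling.\<close>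

definition local_factor :: "nat \<Rightarrow> nat \<Rightarrow> (nat \<Rightarrow> nat \<Rightarrow> nat \<Rightarrow> nat \<Rightarrow> real)
    \<Rightarrow> (nat \<times> nat) option \<Rightarrow> (nat \<times> nat) option \<Rightarrow> real" where
  "local_factor nA nB P eA eB = (case (eA, eB) of
       (Some (x, a), Some (y, b)) \<Rightarrow> P a b x y
     | (Some (x, a), None) \<Rightarrow> (\<Sum>b<nB. P a b x 0)
     | (None, Some (y, b)) \<Rightarrow> (\<Sum>a<nA. P a b 0 y)
     | (None, None) \<Rightarrow> 1)"

lemma box_factor_eq_local_factor:
  "box_factor nA nB P hA hB i = local_factor (nA i) (nB i) (P i) (map_of hA i) (map_of hB i)"
  unfolding box_factor_def local_factor_def ..

lemma local_factor_nonneg: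
  assumes "is_box nX nA nY nB P" "in_alphabet nX nA eA" "in_alphabet nY nB eB"
  shows "0 \<le> local_factor nA nB P eA eB"
  using assms is_box_nonneg[OF assms(1)] is_box_inputs_nonempty[OF assms(1)]
  unfolding local_factor_def in_alphabet_def
  by (auto split: option.splits intro!: sum_nonneg)

lemma sum_local_factor_right:
  assumes box: "is_box nX nA nY nB P" and eA: "in_alphabet nX nA eA" and y: "y < nY"
  shows "(\<Sum>b<nB. local_factor nA nB P eA (Some (y, b))) = local_factor nA nB P eA None"
proof (cases eA)
  case None
  then show ?thesis
    using is_box_normalized[OF box is_box_inputs_nonempty(1)[OF box] y]
    by (simp add: local_factor_def sum.swap[of _ "{..<nB}"])
next
  case (Some e)
  then show ?thesis
    using eA is_box_no_signalling_left[OF box _ _ y is_box_inputs_nonempty(2)[OF box]]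
    by (cases e) (simp add: local_factor_def in_alphabet_def)
qed

lemma sum_local_factor_left:
  assumes box: "is_box nX nA nY nB P" and eB: "in_alphabet nY nB eB" and x: "x < nX"
  shows "(\<Sum>a<nA. local_factor nA nB P (Some (x, a)) eB) = local_factor nA nB P None eB"
proof (cases eB)
  case None
  then show ?thesis
    using is_box_normalized[OF box x is_box_inputs_nonempty(2)[OF box]]
    by (simp add: local_factor_def)
next
  case (Some e)
  then show ?thesis
    using eB is_box_no_signalling_right[OF box _ _ x is_box_inputs_nonempty(1)[OF box]]
    by (cases e) (simp add: local_factor_def in_alphabet_def)
qed

context
  fixes S nX nA nY nB P L
  assumes box: "is_box nX nA nY nB P"
    and L: "box_functional S nX nA nY nB P L"
    and containsA: "\<exists>(m, n)\<in>S. 1 \<le> m" and containsB: "\<exists>(m, n)\<in>S. 1 \<le> n"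
begin

lemma box_functional_marginals:
  assumes x: "x < nX" and y: "y < nY"
  shows box_functional_marginal_left:
      "a < nA \<Longrightarrow> evL L ([(x, a)], []) = (\<Sum>b<nB. P a b x y)"
    and box_functional_marginal_right:
      "b < nB \<Longrightarrow> evL L ([], [(y, b)]) = (\<Sum>a<nA. P a b x y)"
proof -
  have K: "psd_kernel (marg_index nA nB)
      (\<lambda>j j'. evL L (wmult (marg_word x y j) (wadj (marg_word x y j'))))"
    using L marg_word_image_subset_Oset[OF containsA containsB x y] unfolding box_functional_def
    by (blast intro: psd_kernel_of_positive_on finite_marg_index)
  have P: "P a b x y = evL L ([(x, a)], [(y, b)])" if "a < nA" "b < nB" for a b
    using L x y that unfolding box_functional_def by blast
  have "(\<Sum>a<nA. \<Sum>b<nB. evL L ([(x, a)], [(y, b)])) = (\<Sum>a<nA. \<Sum>b<nB. P a b x y)"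
    using P by (intro sum.cong) auto
  also have "\<dots> = 1"
    using is_box_normalized[OF box x y] .
  finally have norm: "(\<Sum>a<nA. \<Sum>b<nB. evL L ([(x, a)], [(y, b)])) = 1" .
  have L1: "L ([], []) = 1"
    using L unfolding box_functional_def by blast
  show "evL L ([(x, a)], []) = (\<Sum>b<nB. P a b x y)" if "a < nA"
    using psd_marg_kernel_marginal_left[OF K L1 norm that] P[OF that] by (auto intro: sum.cong)
  show "evL L ([], [(y, b)]) = (\<Sum>a<nA. P a b x y)" if "b < nB"
    using psd_marg_kernel_marginal_right[OF K L1 norm that] P[OF _ that] by (auto intro: sum.cong)
qed

lemma evL_sym_part_local_factor:
  assumes eA: "in_alphabet nX nA eA" and eB: "in_alphabet nY nB eB"
  shows "evL (sym_part L) (opt_list eA, opt_list eB) = local_factor nA nB P eA eB"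
proof -
  have x0: "0 < nX" and y0: "0 < nY"
    using is_box_inputs_nonempty[OF box] by auto
  have "wadj (opt_list eA, opt_list eB) = (opt_list eA, opt_list eB)"
    unfolding wadj_def opt_list_def by (auto split: option.splits)
  then have "evL (sym_part L) (opt_list eA, opt_list eB) = evL L (opt_list eA, opt_list eB)"
    by (rule evL_sym_part_self_adjoint)
  also have "\<dots> = local_factor nA nB P eA eB"
  proof (cases eA; cases eB)
    assume "eA = None" "eB = None"
    then show ?thesis
      using L unfolding box_functional_def
      by (simp add: opt_list_def local_factor_def evL_def red_word_def)
  next
    fix f assume "eA = None" "eB = Some f"
    then show ?thesis
      using eB box_functional_marginal_right[OF x0]
      by (cases f) (simp_all add: opt_list_def local_factor_def in_alphabet_def)
  next
    fix e assume "eA = Some e" "eB = None"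
    then show ?thesis
      using eA box_functional_marginal_left[OF _ y0]
      by (cases e) (simp_all add: opt_list_def local_factor_def in_alphabet_def)
  next
    fix e f assume "eA = Some e" "eB = Some f"
    then show ?thesis
      using eA eB L unfolding box_functional_def
      by (cases e; cases f) (simp add: opt_list_def local_factor_def in_alphabet_def)
  qed
  finally show ?thesis .
qed

end

lemma sum_sum_if_conj:
  assumes "finite A" "finite B"
  shows "(\<Sum>x\<in>A. \<Sum>y\<in>B. if P x \<and> Q y then f x y else 0)
    = (\<Sum>x\<in>{x\<in>A. P x}. \<Sum>y\<in>{y\<in>B. Q y}. (f x y :: real))"
proof -
  have "(\<Sum>x\<in>{x\<in>A. P x}. G x) = (\<Sum>x\<in>A. if P x then G x else 0)" for G :: "_ \<Rightarrow> real"
    by (rule sum.inter_filter[OF assms(1)])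
  moreover have "(\<Sum>y\<in>{y\<in>B. Q y}. G y) = (\<Sum>y\<in>B. if Q y then G y else 0)" for G :: "_ \<Rightarrow> real"
    by (rule sum.inter_filter[OF assms(2)])
  ultimately show ?thesis
    by (auto intro: sum.cong)
qed

section \<open>The wired functional\<close>

locale wired_boxes =
  fixes S :: "(nat \<times> nat) set" and k :: nat and nX nA nY nB :: "nat \<Rightarrow> nat"
    and P :: "nat \<Rightarrow> nat \<Rightarrow> nat \<Rightarrow> nat \<Rightarrow> nat \<Rightarrow> real"
    and nX' nA' nY' nB' :: nat
    and nxtA nxtB :: "nat \<Rightarrow> hist \<Rightarrow> (nat \<times> nat) option"
    and outA outB :: "nat \<Rightarrow> hist \<Rightarrow> nat"
    and L :: "nat \<Rightarrow> word \<Rightarrow> real"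
  assumes containsA: "\<exists>(m, n)\<in>S. 1 \<le> m" and containsB: "\<exists>(m, n)\<in>S. 1 \<le> n"
    and boxes: "\<And>i. i < k \<Longrightarrow> is_box (nX i) (nA i) (nY i) (nB i) (P i)"
    and functionals: "\<And>i. i < k \<Longrightarrow> box_functional S (nX i) (nA i) (nY i) (nB i) (P i) (L i)"
    and wA: "wiring_wf k nX nX' nA' nxtA outA" and wB: "wiring_wf k nY nY' nB' nxtB outB"
begin

sublocale A: wiring k nX nX' nA' nA nxtA outA
  by unfold_locales (rule wA)

sublocale B: wiring k nY nY' nB' nB nxtB outB
  by unfold_locales (rule wB)

definition transcript_pairs :: "word \<Rightarrow> (hist list \<times> hist list) set" where
  "transcript_pairs w = A.transcripts (fst w) \<times> B.transcripts (snd w)"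

definition box_words :: "nat \<Rightarrow> hist list \<times> hist list \<Rightarrow> word" where
  "box_words i p = (box_word i (fst p), box_word i (snd p))"

definition wiredL :: "word \<Rightarrow> real" where
  "wiredL w = (\<Sum>\<tau>\<in>A.transcripts (fst w). \<Sum>\<sigma>\<in>B.transcripts (snd w).
     \<Prod>i<k. evL (sym_part (L i)) (box_word i \<tau>, box_word i \<sigma>))"

definition inputs_in_range :: "word \<Rightarrow> bool" where
  "inputs_in_range w \<longleftrightarrow> (\<forall>p\<in>set (fst w). fst p < nX') \<and> (\<forall>p\<in>set (snd w). fst p < nY')"

lemma Oset_inputs_in_range: "u \<in> Oset S nX' nA' nY' nB' \<Longrightarrow> inputs_in_range u"
  unfolding Oset_def AmBn_def inputs_in_range_def by auto

lemma inputs_in_range_wmult: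
  "inputs_in_range u \<Longrightarrow> inputs_in_range v \<Longrightarrow> inputs_in_range (wmult u (wadj v))"
  unfolding inputs_in_range_def wmult_def wadj_def by auto

lemma finite_transcript_pairs: "inputs_in_range w \<Longrightarrow> finite (transcript_pairs w)"
  unfolding inputs_in_range_def transcript_pairs_def
  by (simp add: A.finite_transcripts B.finite_transcripts)

lemma wiredL_unit: "wiredL ([], []) = 1"
  using functionals unfolding box_functional_def
  by (simp add: wiredL_def A.transcripts_Nil B.transcripts_Nil sym_part_def evL_def red_word_def
      wadj_def)

lemma wiredL_eq_left:
  "wiredL (u, v) = (\<Sum>\<tau>\<in>A.transcripts u. (\<lambda>ws. \<Sum>\<sigma>\<in>B.transcripts v.
      \<Prod>i<k. evL (sym_part (L i)) (ws i, box_word i \<sigma>)) (\<lambda>i. box_word i \<tau>))"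
  by (simp add: wiredL_def)

lemma wiredL_eq_right:
  "wiredL (u, v) = (\<Sum>\<sigma>\<in>B.transcripts v. (\<lambda>ws. \<Sum>\<tau>\<in>A.transcripts u.
      \<Prod>i<k. evL (sym_part (L i)) (box_word i \<tau>, ws i)) (\<lambda>i. box_word i \<sigma>))"
  by (simp add: wiredL_def sum.swap[of _ "A.transcripts u"])

lemma respects_red_left:
  "A.respects_red (\<lambda>ws. \<Sum>\<sigma>\<in>B.transcripts v. \<Prod>i<k. evL (sym_part (L i)) (ws i, box_word i \<sigma>))"
  unfolding A.respects_red_def
  by (auto intro!: sum.neutral prod_zero sum.cong prod.cong evL_eq_0_left evL_cong_left)

lemma respects_red_right:
  "B.respects_red (\<lambda>ws. \<Sum>\<tau>\<in>A.transcripts u. \<Prod>i<k. evL (sym_part (L i)) (box_word i \<tau>, ws i))"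
  unfolding B.respects_red_def
  by (auto intro!: sum.neutral prod_zero sum.cong prod.cong evL_eq_0_right evL_cong_right)

text \<open>The wired functional already respects the relations of the projectors, so it need not be
  evaluated through the normal form.\<close>

lemma evL_wiredL:
  assumes "inputs_in_range w"
  shows "evL wiredL w = wiredL w"
proof -
  obtain u v where w: "w = (u, v)"
    by (cases w)
  have u: "\<forall>p\<in>set u. fst p < nX'" and v: "\<forall>p\<in>set v. fst p < nY'"
    using assms w unfolding inputs_in_range_def by auto
  show ?thesis
  proof (cases "clash_free u \<and> clash_free v")
    case True
    have "wiredL (u, v) = wiredL (remdups_adj u, v)"
      unfolding wiredL_eq_left by (rule A.sum_transcripts_remdups_adj[OF respects_red_left u])
    also have "\<dots> = wiredL (remdups_adj u, remdups_adj v)"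
      unfolding wiredL_eq_right by (rule B.sum_transcripts_remdups_adj[OF respects_red_right v])
    finally show ?thesis
      using True w by (simp add: evL_def red_word_eq)
  next
    case False
    have "wiredL (u, v) = 0"
    proof (cases "clash_free u")
      case True
      then have "\<not> clash_free v"
        using False by simp
      then show ?thesis
        unfolding wiredL_eq_right by (rule B.sum_transcripts_clash[OF respects_red_right v])
    next
      case False
      then show ?thesis
        unfolding wiredL_eq_left by (rule A.sum_transcripts_clash[OF respects_red_left u])
    qed
    then show ?thesis
      using False w by (auto simp: evL_def red_word_eq)
  qed
qed

lemma wiredL_wmult_wadj:
  assumes u: "inputs_in_range u" and v: "inputs_in_range v"
  shows "wiredL (wmult u (wadj v)) = (\<Sum>p\<in>transcript_pairs u. \<Sum>q\<in>transcript_pairs v.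
    \<Prod>i<k. evL (sym_part (L i)) (wmult (box_words i p) (wadj (box_words i q))))"
proof -
  have va: "\<forall>p\<in>set (fst v). fst p < nX'" and vb: "\<forall>p\<in>set (snd v). fst p < nY'"
    using v unfolding inputs_in_range_def by auto
  have revA: "box_word i (rev \<tau>) = rev (box_word i \<tau>)" if "\<tau> \<in> A.transcripts (fst v)" for i \<tau>
    using box_word_rev A.transcript_length_box_letters[OF va that] by blast
  have revB: "box_word i (rev \<sigma>) = rev (box_word i \<sigma>)" if "\<sigma> \<in> B.transcripts (snd v)" for i \<sigma>
    using box_word_rev B.transcript_length_box_letters[OF vb that] by blast
  let ?F = "\<lambda>\<tau> \<sigma>. \<Prod>i<k. evL (sym_part (L i)) (box_word i \<tau>, box_word i \<sigma>)"
  have "wiredL (wmult u (wadj v))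
      = (\<Sum>\<tau>\<in>A.transcripts (fst u @ rev (fst v)). \<Sum>\<sigma>\<in>B.transcripts (snd u @ rev (snd v)). ?F \<tau> \<sigma>)"
    by (simp add: wiredL_def wmult_def wadj_def)
  also have "\<dots> = (\<Sum>\<tau>1\<in>A.transcripts (fst u). \<Sum>\<tau>2\<in>A.transcripts (fst v).
      \<Sum>\<sigma>1\<in>B.transcripts (snd u). \<Sum>\<sigma>2\<in>B.transcripts (snd v). ?F (\<tau>1 @ rev \<tau>2) (\<sigma>1 @ rev \<sigma>2))"
    by (simp add: A.sum_transcripts_append B.sum_transcripts_append
        A.transcripts_rev B.transcripts_rev
        sum.reindex inj_on_def sum_distrib_left)
  also have "\<dots> = (\<Sum>\<tau>1\<in>A.transcripts (fst u). \<Sum>\<sigma>1\<in>B.transcripts (snd u).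
      \<Sum>\<tau>2\<in>A.transcripts (fst v). \<Sum>\<sigma>2\<in>B.transcripts (snd v). ?F (\<tau>1 @ rev \<tau>2) (\<sigma>1 @ rev \<sigma>2))"
    by (intro sum.cong refl sum.swap)
  also have "\<dots> = (\<Sum>p\<in>transcript_pairs u. \<Sum>q\<in>transcript_pairs v.
      \<Prod>i<k. evL (sym_part (L i)) (wmult (box_words i p) (wadj (box_words i q))))"
    unfolding transcript_pairs_def sum.cartesian_product'
    by (simp add: box_words_def wmult_def wadj_def revA revB)
  finally show ?thesis .
qed

lemma box_words_in_Oset:
  assumes "u \<in> Oset S nX' nA' nY' nB'" "p \<in> transcript_pairs u" "i < k"
  shows "box_words i p \<in> Oset S (nX i) (nA i) (nY i) (nB i)"
proof -
  obtain m n where mn: "(m, n) \<in> S" and u: "u \<in> AmBn m n nX' nA' nY' nB'"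
    using assms(1) unfolding Oset_def by blast
  have ua: "\<forall>p\<in>set (fst u). fst p < nX'" and ub: "\<forall>p\<in>set (snd u). fst p < nY'"
    using u unfolding AmBn_def by auto
  obtain \<tau> \<sigma> where p: "p = (\<tau>, \<sigma>)"
    and \<tau>: "\<tau> \<in> A.transcripts (fst u)" and \<sigma>: "\<sigma> \<in> B.transcripts (snd u)"
    using assms(2) unfolding transcript_pairs_def by auto
  have "length (box_word i \<tau>) \<le> length (fst u)" "length (box_word i \<sigma>) \<le> length (snd u)"
    using length_box_word A.transcript_length_box_letters[OF ua \<tau>] A.length_transcript[OF \<tau>]
      B.transcript_length_box_letters[OF ub \<sigma>] B.length_transcript[OF \<sigma>] by fastforce+
  moreover have "set (box_word i \<tau>) \<subseteq> {0..<nX i} \<times> {0..<nA i}"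
      "set (box_word i \<sigma>) \<subseteq> {0..<nY i} \<times> {0..<nB i}"
    using A.transcript_set_box_letters[OF ua \<tau> _ assms(3)]
      B.transcript_set_box_letters[OF ub \<sigma> _ assms(3)]
    by (auto simp: box_word_def)
  ultimately have "box_words i p \<in> AmBn m n (nX i) (nA i) (nY i) (nB i)"
    using u unfolding AmBn_def box_words_def p by auto
  then show ?thesis
    using mn unfolding Oset_def by blast
qed

text \<open>Positivity: the quadratic form of the wired functional is that of the entrywise product of the
  kernels of the k boxes on pairs (u, transcript pair of u), hence nonnegative by the Schur product
  theorem.\<close>

lemma positive_on_wiredL: "positive_on (Oset S nX' nA' nY' nB') wiredL"
  unfolding positive_on_def
proof (intro allI impI, elim conjE)
  fix W c assume W: "finite W" "W \<subseteq> Oset S nX' nA' nY' nB'"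
  define J where "J = Sigma W transcript_pairs"
  define K where
    "K i j j' = evL (sym_part (L i)) (wmult (box_words i (snd j)) (wadj (box_words i (snd j'))))"
    for i and j j' :: "word \<times> hist list \<times> hist list"
  have range: "inputs_in_range u" if "u \<in> W" for u
    using W(2) that Oset_inputs_in_range by blast
  have finite: "finite J"
    unfolding J_def using W(1) range finite_transcript_pairs by blast
  have Sigma: "(\<Sum>j\<in>J. F j) = (\<Sum>u\<in>W. \<Sum>p\<in>transcript_pairs u. F (u, p))" for F :: "_ \<Rightarrow> real"
    unfolding J_def using W(1) range finite_transcript_pairs by (simp add: sum.Sigma)
  have "sym_kernel J (K i) \<and> psd_kernel J (K i)" if "i \<in> {..<k}" for i
  proof
    have pos: "positive_on (Oset S (nX i) (nA i) (nY i) (nB i)) (sym_part (L i))"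
      using functionals that unfolding box_functional_def by (simp add: positive_on_sym_part)
    have "(\<lambda>j. box_words i (snd j)) ` J \<subseteq> Oset S (nX i) (nA i) (nY i) (nB i)"
      using box_words_in_Oset W(2) that unfolding J_def by auto
    then show "psd_kernel J (K i)"
      unfolding K_def by (rule psd_kernel_of_positive_on[OF pos finite])
    show "sym_kernel J (K i)"
      unfolding K_def by (rule sym_kernel_sym_part)
  qed
  then have "psd_kernel J (\<lambda>j j'. \<Prod>i<k. K i j j')"
    by (intro psd_kernel_prod[OF finite]) auto
  then have "0 \<le> (\<Sum>j\<in>J. \<Sum>j'\<in>J. c (fst j) * c (fst j') * (\<Prod>i<k. K i j j'))"
    by (rule psd_kernelD)
  also have "\<dots> = (\<Sum>u\<in>W. \<Sum>p\<in>transcript_pairs u. \<Sum>v\<in>W. \<Sum>q\<in>transcript_pairs v.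
      c u * c v * (\<Prod>i<k. K i (u, p) (v, q)))"
    using Sigma by (simp add: sum_distrib_left)
  also have "\<dots> = (\<Sum>u\<in>W. \<Sum>v\<in>W. \<Sum>p\<in>transcript_pairs u. \<Sum>q\<in>transcript_pairs v.
      c u * c v * (\<Prod>i<k. K i (u, p) (v, q)))"
    by (intro sum.cong refl sum.swap)
  also have "\<dots> = (\<Sum>u\<in>W. \<Sum>v\<in>W. c u * c v * evL wiredL (wmult u (wadj v)))"
    using range
    by (intro sum.cong refl)
      (simp add: evL_wiredL inputs_in_range_wmult wiredL_wmult_wadj K_def sum_distrib_left)
  finally show "0 \<le> (\<Sum>u\<in>W. \<Sum>v\<in>W. c u * c v * evL wiredL (wmult u (wadj v)))" .
qed

lemma wired_box_eq_sum_outcome_hists: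
  assumes x: "x < nX'" and y: "y < nY'"
  shows "wired_box k nA nB P nxtA outA nxtB outB a b x y
    = (\<Sum>hA\<in>A.outcome_hists (x, a). \<Sum>hB\<in>B.outcome_hists (y, b). \<Prod>i<k. box_factor nA nB P hA hB i)"
proof -
  have "A.outcome_hists (x, a) = {h \<in> {h. complete_hist nA nxtA x h}. outA x h = a}"
    "B.outcome_hists (y, b) = {h \<in> {h. complete_hist nB nxtB y h}. outB y h = b}"
    unfolding A.outcome_hists_def B.outcome_hists_def by auto
  then show ?thesis
    unfolding wired_box_def
    by (simp add: sum_sum_if_conj[OF A.finite_complete_hists[OF x] B.finite_complete_hists[OF y]])
qed

lemma wired_box_eq_evL_wiredL:
  assumes x: "x < nX'" and y: "y < nY'"
  shows "wired_box k nA nB P nxtA outA nxtB outB a b x y = evL wiredL ([(x, a)], [(y, b)])"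
proof -
  have "box_factor nA nB P hA hB i = evL (sym_part (L i)) (box_letters i hA, box_letters i hB)"
    if "hA \<in> A.outcome_hists (x, a)" "hB \<in> B.outcome_hists (y, b)" "i < k" for hA hB i
  proof -
    have "complete_hist nA nxtA x hA" "complete_hist nB nxtB y hB"
      using that unfolding A.outcome_hists_def B.outcome_hists_def by auto
    then show ?thesis
      using evL_sym_part_local_factor[OF boxes functionals containsA containsB]
        A.complete_hist_in_alphabet[OF x] B.complete_hist_in_alphabet[OF y]
        A.box_letters_complete_hist[OF x] B.box_letters_complete_hist[OF y] \<open>i < k\<close>
      by (simp add: box_factor_eq_local_factor)
  qed
  then have "wired_box k nA nB P nxtA outA nxtB outB a b x y = wiredL ([(x, a)], [(y, b)])"
    unfolding wired_box_eq_sum_outcome_hists[OF x y]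
    by (simp add: wiredL_def A.sum_transcripts_Cons B.sum_transcripts_Cons
        A.transcripts_Nil B.transcripts_Nil
        sum.swap[of _ "A.outcome_hists _"])
  also have "\<dots> = evL wiredL ([(x, a)], [(y, b)])"
    using x y by (simp add: evL_wiredL inputs_in_range_def)
  finally show ?thesis .
qed

lemma wired_box_nonneg:
  assumes x: "x < nX'" and y: "y < nY'"
  shows "0 \<le> wired_box k nA nB P nxtA outA nxtB outB a b x y"
  unfolding wired_box_eq_sum_outcome_hists[OF x y] box_factor_eq_local_factor
  using boxes A.complete_hist_in_alphabet[OF x] B.complete_hist_in_alphabet[OF y]
  by (auto simp: A.outcome_hists_def B.outcome_hists_def
      intro!: sum_nonneg prod_nonneg local_factor_nonneg)

text \<open>Summing out one party's output, the other party's boxes are only probed on one side, and the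
  unprobed factors sum to 1 along the run (no-signalling of the boxes).\<close>

lemma sum_wired_box_right:
  assumes x: "x < nX'" and y: "y < nY'"
  shows "(\<Sum>b<nB'. wired_box k nA nB P nxtA outA nxtB outB a b x y)
    = (\<Sum>hA\<in>A.outcome_hists (x, a). \<Prod>i<k. local_factor (nA i) (nB i) (P i) (map_of hA i) None)"
proof -
  have "(\<Sum>b<nB'. wired_box k nA nB P nxtA outA nxtB outB a b x y)
    = (\<Sum>hA\<in>A.outcome_hists (x, a). \<Sum>hB | complete_hist nB nxtB y hB.
        \<Prod>i<k. local_factor (nA i) (nB i) (P i) (map_of hA i) (map_of hB i))"
    unfolding wired_box_eq_sum_outcome_hists[OF x y] box_factor_eq_local_factor
    by (subst sum.swap) (simp add: B.sum_outcome_hists[OF y])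
  also have "\<dots>
      = (\<Sum>hA\<in>A.outcome_hists (x, a). \<Prod>i<k. local_factor (nA i) (nB i) (P i) (map_of hA i) None)"
    using boxes A.complete_hist_in_alphabet[OF x]
    by (intro sum.cong refl B.sum_complete_hists[OF y] sum_local_factor_right)
      (auto simp: A.outcome_hists_def)
  finally show ?thesis .
qed

lemma sum_wired_box_left:
  assumes x: "x < nX'" and y: "y < nY'"
  shows "(\<Sum>a<nA'. wired_box k nA nB P nxtA outA nxtB outB a b x y)
    = (\<Sum>hB\<in>B.outcome_hists (y, b). \<Prod>i<k. local_factor (nA i) (nB i) (P i) None (map_of hB i))"
proof -
  have "(\<Sum>a<nA'. wired_box k nA nB P nxtA outA nxtB outB a b x y)
    = (\<Sum>hB\<in>B.outcome_hists (y, b). \<Sum>hA | complete_hist nA nxtA x hA.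
        \<Prod>i<k. local_factor (nA i) (nB i) (P i) (map_of hA i) (map_of hB i))"
    unfolding wired_box_eq_sum_outcome_hists[OF x y] box_factor_eq_local_factor
    by (subst (2) sum.swap)
      (simp add: A.sum_outcome_hists[OF x] sum.swap[of _ "{h. complete_hist nA nxtA x h}"])
  also have "\<dots>
      = (\<Sum>hB\<in>B.outcome_hists (y, b). \<Prod>i<k. local_factor (nA i) (nB i) (P i) None (map_of hB i))"
    using boxes B.complete_hist_in_alphabet[OF y]
    by (intro sum.cong refl A.sum_complete_hists[OF x] sum_local_factor_left)
      (auto simp: B.outcome_hists_def)
  finally show ?thesis .
qed

lemma sum_sum_wired_box:
  assumes x: "x < nX'" and y: "y < nY'"
  shows "(\<Sum>a<nA'. \<Sum>b<nB'. wired_box k nA nB P nxtA outA nxtB outB a b x y) = 1"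
proof -
  have "(\<Sum>a<nA'. \<Sum>b<nB'. wired_box k nA nB P nxtA outA nxtB outB a b x y)
    = (\<Sum>hA | complete_hist nA nxtA x hA. \<Prod>i<k. local_factor (nA i) (nB i) (P i) (map_of hA i) None)"
    by (simp add: sum_wired_box_right[OF x y] A.sum_outcome_hists[OF x])
  also have "\<dots> = (\<Prod>i<k. local_factor (nA i) (nB i) (P i) None None)"
    using boxes
    by (intro A.sum_complete_hists[OF x] sum_local_factor_left) (auto simp: in_alphabet_def)
  also have "\<dots> = 1"
    by (simp add: local_factor_def)
  finally show ?thesis .
qed

lemma is_box_wired_box:
  assumes "0 < nX'" "0 < nA'" "0 < nY'" "0 < nB'"
  shows "is_box nX' nA' nY' nB' (wired_box k nA nB P nxtA outA nxtB outB)"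
  using assms wired_box_nonneg sum_sum_wired_box sum_wired_box_right sum_wired_box_left
  unfolding is_box_def by simp

end

theorem theorem4:
  fixes S :: "(nat \<times> nat) set"
    and k :: nat
    and nX nA nY nB :: "nat \<Rightarrow> nat"
    and P :: "nat \<Rightarrow> nat \<Rightarrow> nat \<Rightarrow> nat \<Rightarrow> nat \<Rightarrow> real"
    and nX' nA' nY' nB' :: nat
    and nxtA nxtB :: "nat \<Rightarrow> hist \<Rightarrow> (nat \<times> nat) option"
    and outA outB :: "nat \<Rightarrow> hist \<Rightarrow> nat"
  assumes containsA: "\<exists>(m, n)\<in>S. 1 \<le> m"
    and containsB: "\<exists>(m, n)\<in>S. 1 \<le> n"
    and boxes: "\<forall>i<k. O_positive S (nX i) (nA i) (nY i) (nB i) (P i)"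
    and alph: "0 < nX'" "0 < nA'" "0 < nY'" "0 < nB'"
    and wA: "wiring_wf k nX nX' nA' nxtA outA"
    and wB: "wiring_wf k nY nY' nB' nxtB outB"
  shows "O_positive S nX' nA' nY' nB' (wired_box k nA nB P nxtA outA nxtB outB)"
proof -
  obtain L where L: "\<And>i. i < k \<Longrightarrow> box_functional S (nX i) (nA i) (nY i) (nB i) (P i) (L i)"
    using boxes unfolding O_positive_iff by metis
  interpret wired_boxes S k nX nA nY nB P nX' nA' nY' nB' nxtA nxtB outA outB L
    using containsA containsB boxes L wA wB by unfold_locales (auto simp: O_positive_iff)
  have "box_functional S nX' nA' nY' nB' (wired_box k nA nB P nxtA outA nxtB outB) wiredL"
    unfolding box_functional_def
    using wiredL_unit positive_on_wiredL wired_box_eq_evL_wiredL by blast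
  then show ?thesis
    unfolding O_positive_iff using is_box_wired_box[OF alph] by blast
qed

end
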